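(* A square complex matrix $A$ is diagonalizable by *congruence (i.e. $R^*AR$ is diagonal for some nonsingular $R$) if and only if both of the following hold: (a) $A$ and $A^*$ have the same null space; (b) the *cosquare $B^{-*}B$ of the regular part $B$ of $A$ is diagonalizable and all its eigenvalues have modulus one.
   Context: The *cosquare of a nonsingular matrix $B$ is $B^{-*}B$, where $B^{-*}=(B^{-1})^*$. Every square complex matrix $A$ is *congruent to a direct sum $B\oplus J_{r_1}(0)\oplus\cdots\oplus J_{r_p}(0)$ with $B$ nonsingular and $J_r(0)$ the $r\times r$ nilpotent Jordan block; this direct sum is uniquely determined up to permutation of the singular summands and replacement of $B$ by a matrix *congruent to it. Such a $B$ is called the regular part of $A$ (its *congruence class, hence the similarity class of its *cosquare, is uniquely determined by $A$). *)

theory Defs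
  imports "Jordan_Normal_Form.Jordan_Normal_Form" "Jordan_Normal_Form.Schur_Decomposition"
    "Jordan_Normal_Form.Matrix_Kernel"
begin

text \<open>Conjugate transpose A^* is mat_adjoint (Schur_Decomposition).\<close>

definition star_congruent :: "complex mat \<Rightarrow> complex mat \<Rightarrow> bool" where
  "star_congruent A C \<longleftrightarrow> (\<exists>S. S \<in> carrier_mat (dim_row C) (dim_row C) \<and> invertible_mat S
      \<and> A = mat_adjoint S * C * S)"

definition diagonalizable_by_star_congruence :: "complex mat \<Rightarrow> bool" where
  "diagonalizable_by_star_congruence A \<longleftrightarrow>
     (\<exists>R. R \<in> carrier_mat (dim_row A) (dim_row A) \<and> invertible_mat R
        \<and> diagonal_mat (mat_adjoint R * A * R))"

definition regular_part :: "complex mat \<Rightarrow> complex mat \<Rightarrow> bool" where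
  "regular_part A B \<longleftrightarrow> square_mat B \<and> invertible_mat B \<and>
     (\<exists>rs. (\<forall>r\<in>set rs. r > 0) \<and>
        star_congruent A (diag_block_mat (B # map (\<lambda>r. jordan_block r 0) rs)))"

definition mat_inv :: "complex mat \<Rightarrow> complex mat" where
  "mat_inv B = (SOME C. inverts_mat B C \<and> inverts_mat C B)"

definition cosquare :: "complex mat \<Rightarrow> complex mat" where
  "cosquare B = mat_adjoint (mat_inv B) * B"

definition diagonalizable_mat :: "complex mat \<Rightarrow> bool" where
  "diagonalizable_mat C \<longleftrightarrow> (\<exists>D. D \<in> carrier_mat (dim_row C) (dim_row C) \<and> diagonal_mat D
      \<and> similar_mat C D)"

end

theory Submission
  imports Defs
begin

text \<open>The *cosquare is the invariant that makes the regular part tractable: it transforms by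
  similarity, \<open>(R\<^sup>* B R)\<^sup>-\<^sup>* (R\<^sup>* B R) = R\<^sup>-\<^sup>1 (B\<^sup>-\<^sup>* B) R\<close>, and for a nonsingular diagonal
  matrix it is diagonal with the unimodular entries \<open>\<delta>\<^sub>i / cnj \<delta>\<^sub>i\<close>. This gives the necessity of (b);
  (a) is necessary because it holds for diagonal matrices and survives *congruence, and it forces
  the nilpotent Jordan blocks of a *congruence canonical form to vanish.

  Conversely, if \<open>B\<^sup>-\<^sup>* B = P D P\<^sup>-\<^sup>1\<close> with \<open>D\<close> diagonal and unimodular, then \<open>C = P\<^sup>* B P\<close>
  satisfies \<open>C = C\<^sup>* D\<close>, i.e. \<open>c\<^sub>i\<^sub>j = d\<^sub>j cnj c\<^sub>j\<^sub>i\<close>. Such "twisted Hermitian" matrices are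
  diagonalized by *congruence through symmetric Gaussian elimination, as Hermitian ones are; a
  transvection creates a nonzero pivot when the diagonal vanishes. Finally, under (a) one
  diagonalizes the Hermitian matrix \<open>A\<^sup>* A\<close> by *congruence; the columns with zero diagonal entry
  span the kernel of \<open>A\<close>, which exhibits \<open>A\<close> as *congruent to \<open>B \<oplus> 0\<close> with \<open>B\<close> nonsingular.\<close>

lemma sum_lessThan_single:
  fixes g :: "nat \<Rightarrow> 'a :: comm_monoid_add"
  assumes "i < n" "\<And>k. k < n \<Longrightarrow> k \<noteq> i \<Longrightarrow> g k = 0"
  shows "(\<Sum>k<n. g k) = g i"
  using sum.mono_neutral_right[of "{..<n}" "{i}" g] assms by auto

lemma sum_lessThan_pair:
  fixes g :: "nat \<Rightarrow> 'a :: comm_monoid_add"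
  assumes "i < n" "j < n" "i \<noteq> j" "\<And>k. k < n \<Longrightarrow> k \<noteq> i \<Longrightarrow> k \<noteq> j \<Longrightarrow> g k = 0"
  shows "(\<Sum>k<n. g k) = g i + g j"
  using sum.mono_neutral_right[of "{..<n}" "{i,j}" g] assms by auto

lemma index_mult_mat_sum:
  "A \<in> carrier_mat m n \<Longrightarrow> B \<in> carrier_mat n q \<Longrightarrow> i < m \<Longrightarrow> j < q \<Longrightarrow>
    (A * B) $$ (i,j) = (\<Sum>l<n. A $$ (i,l) * B $$ (l,j))"
  by (simp add: scalar_prod_def lessThan_atLeast0)

lemma index_mult_mat_vec_sum:
  "A \<in> carrier_mat m n \<Longrightarrow> v \<in> carrier_vec n \<Longrightarrow> i < m \<Longrightarrow>
    (A *\<^sub>v v) $ i = (\<Sum>l<n. A $$ (i,l) * v $ l)"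
  by (simp add: scalar_prod_def lessThan_atLeast0)

lemma diagonal_mult_mat_vec:
  assumes "D \<in> carrier_mat n n" "diagonal_mat D" "v \<in> carrier_vec n" "i < n"
  shows "(D *\<^sub>v v) $ i = D $$ (i,i) * v $ i"
proof -
  have "(D *\<^sub>v v) $ i = (\<Sum>l<n. D $$ (i,l) * v $ l)"
    by (rule index_mult_mat_vec_sum[OF assms(1,3,4)])
  also have "\<dots> = D $$ (i,i) * v $ i"
    by (rule sum_lessThan_single) (use assms in \<open>auto simp: diagonal_mat_def\<close>)
  finally show ?thesis .
qed

lemma diagonal_imp_upper_triangular:
  "A \<in> carrier_mat n n \<Longrightarrow> diagonal_mat A \<Longrightarrow> upper_triangular A"
  unfolding diagonal_mat_def upper_triangular_def by auto

lemma adjoint_dim [simp]: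
  fixes A :: "'a :: conjugatable_field mat"
  shows "dim_row (mat_adjoint A) = dim_col A" "dim_col (mat_adjoint A) = dim_row A"
  by (simp_all add: mat_adjoint_def)

lemma adjoint_index [simp]:
  fixes A :: "'a :: conjugatable_field mat"
  shows "i < dim_col A \<Longrightarrow> j < dim_row A \<Longrightarrow> mat_adjoint A $$ (i,j) = conjugate (A $$ (j,i))"
  unfolding mat_adjoint_def mat_of_rows_def by simp

lemma adjoint_carrier [simp]:
  fixes A :: "'a :: conjugatable_field mat"
  shows "A \<in> carrier_mat n m \<Longrightarrow> mat_adjoint A \<in> carrier_mat m n"
  unfolding carrier_mat_def by simp

lemma adjoint_adjoint [simp]: "mat_adjoint (mat_adjoint A) = (A :: 'a :: conjugatable_field mat)"
  by (rule eq_matI) auto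

lemma adjoint_mult:
  fixes A :: "'a :: conjugatable_field mat"
  assumes "A \<in> carrier_mat n m" "B \<in> carrier_mat m k"
  shows "mat_adjoint (A * B) = mat_adjoint B * mat_adjoint A"
  using assms by (intro eq_matI)
    (auto simp: scalar_prod_def sum_conjugate conjugate_dist_mul mult.commute)

lemma diagonal_mat_adjoint:
  "diagonal_mat A \<Longrightarrow> diagonal_mat (mat_adjoint (A :: 'a :: conjugatable_field mat))"
  unfolding diagonal_mat_def by auto

lemma conjugate_one [simp]: "conjugate (1 :: 'a :: conjugatable_field) = 1"
proof -
  have "conjugate (1 :: 'a) * conjugate 1 = conjugate 1"
    using conjugate_dist_mul[of "1 :: 'a" 1] by simp
  then show ?thesis by (simp add: mult_cancel_right2)
qed

lemma adjoint_one [simp]: "mat_adjoint (1\<^sub>m n :: 'a :: conjugatable_field mat) = 1\<^sub>m n"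
  by (rule eq_matI) auto

lemma adjoint_zero [simp]: "mat_adjoint (0\<^sub>m n m :: 'a :: conjugatable_field mat) = 0\<^sub>m m n"
  by (rule eq_matI) auto

lemma adjoint_four_block_mat:
  fixes A :: "'a :: conjugatable_field mat"
  assumes "A \<in> carrier_mat n n" "B \<in> carrier_mat n m" "C \<in> carrier_mat m n" "D \<in> carrier_mat m m"
  shows "mat_adjoint (four_block_mat A B C D) =
    four_block_mat (mat_adjoint A) (mat_adjoint C) (mat_adjoint B) (mat_adjoint D)"
  using assms by (intro eq_matI) auto

lemma invertible_mat_iff_inverse:
  assumes "A \<in> carrier_mat n n"
  shows "invertible_mat A \<longleftrightarrow> (\<exists>B \<in> carrier_mat n n. A * B = 1\<^sub>m n \<and> B * A = 1\<^sub>m n)"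
proof
  assume "invertible_mat A"
  then obtain B where AB: "A * B = 1\<^sub>m n" and BA: "B * A = 1\<^sub>m (dim_row B)"
    using assms unfolding invertible_mat_def inverts_mat_def by auto
  from arg_cong[OF AB, of dim_col] arg_cong[OF BA, of dim_col] have "B \<in> carrier_mat n n"
    using assms by auto
  with AB BA show "\<exists>B \<in> carrier_mat n n. A * B = 1\<^sub>m n \<and> B * A = 1\<^sub>m n" by auto
next
  assume "\<exists>B \<in> carrier_mat n n. A * B = 1\<^sub>m n \<and> B * A = 1\<^sub>m n"
  with assms show "invertible_mat A"
    unfolding invertible_mat_def inverts_mat_def by auto
qed

lemma invertible_matI:
  fixes A :: "'a :: field mat"
  assumes "A \<in> carrier_mat n n" "B \<in> carrier_mat n n" "A * B = 1\<^sub>m n"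
  shows "invertible_mat A"
  using invertible_mat_iff_inverse[OF assms(1)] assms mat_mult_left_right_inverse[OF assms] by auto

lemma invertible_mat_mult:
  fixes A :: "'a :: field mat"
  assumes A: "A \<in> carrier_mat n n" "invertible_mat A" and B: "B \<in> carrier_mat n n" "invertible_mat B"
  shows "invertible_mat (A * B)"
proof -
  obtain A' where A': "A' \<in> carrier_mat n n" "A * A' = 1\<^sub>m n"
    using A invertible_mat_iff_inverse by blast
  obtain B' where B': "B' \<in> carrier_mat n n" "B * B' = 1\<^sub>m n"
    using B invertible_mat_iff_inverse by blast
  have "A * B * (B' * A') = A * (B * B') * A'"
    using A(1) B(1) A'(1) B'(1) by (simp add: assoc_mult_mat[of _ n n _ n _ n])
  also have "\<dots> = 1\<^sub>m n" using A A' B' by simp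
  finally have "A * B * (B' * A') = 1\<^sub>m n" .
  with A B A' B' show ?thesis by (intro invertible_matI[of _ n "B' * A'"]) auto
qed

lemma invertible_mat_iff_det:
  fixes A :: "'a :: field mat"
  assumes A: "A \<in> carrier_mat n n"
  shows "invertible_mat A \<longleftrightarrow> det A \<noteq> 0"
proof
  assume "invertible_mat A"
  then obtain B where "B \<in> carrier_mat n n" "A * B = 1\<^sub>m n" using A invertible_mat_iff_inverse by blast
  then have "det A * det B = 1" using det_mult[OF A] det_one by metis
  then show "det A \<noteq> 0" by auto
next
  assume "det A \<noteq> 0"
  then obtain B where "B \<in> carrier_mat n n" "A * B = 1\<^sub>m n"
    using det_non_zero_imp_unit[OF A, of "()"] unfolding Units_def ring_mat_def by auto
  then show "invertible_mat A" using invertible_matI[OF A] by blast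
qed

lemma invertible_mat_iff_kernel:
  fixes A :: "'a :: field mat"
  assumes "A \<in> carrier_mat n n"
  shows "invertible_mat A \<longleftrightarrow> (\<forall>v \<in> carrier_vec n. A *\<^sub>v v = 0\<^sub>v n \<longrightarrow> v = 0\<^sub>v n)"
  unfolding invertible_mat_iff_det[OF assms] det_0_iff_vec_prod_zero_field[OF assms] by auto

lemma invertible_mat_adjoint:
  fixes A :: "'a :: conjugatable_field mat"
  assumes A: "A \<in> carrier_mat n n" "invertible_mat A"
  shows "invertible_mat (mat_adjoint A)"
proof -
  obtain B where B: "B \<in> carrier_mat n n" "B * A = 1\<^sub>m n"
    using A invertible_mat_iff_inverse by blast
  have "mat_adjoint A * mat_adjoint B = 1\<^sub>m n"
    using adjoint_mult[OF B(1) A(1)] B(2) by simp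
  then show ?thesis using A B by (intro invertible_matI[of _ n "mat_adjoint B"]) auto
qed

lemma invertible_diagonal_mat_iff:
  fixes D :: "'a :: field mat"
  assumes D: "D \<in> carrier_mat n n" "diagonal_mat D"
  shows "invertible_mat D \<longleftrightarrow> (\<forall>i<n. D $$ (i,i) \<noteq> 0)"
proof -
  have "det D = (\<Prod>j = 0..<n. D $$ (j,j))"
    using det_upper_triangular[OF diagonal_imp_upper_triangular[OF D] D(1)] D(1)
    by (simp add: prod_list_diag_prod)
  then show ?thesis unfolding invertible_mat_iff_det[OF D(1)] by auto
qed

text \<open>Padding the product of an \<open>a \<times> b\<close> and a \<open>b \<times> a\<close> matrix to \<open>a \<times> a\<close> with zeros:
  if \<open>b < a\<close> the padded left factor has a zero column, so it cannot be invertible.\<close>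
lemma right_inverse_dim_le:
  fixes X :: "'a :: field mat"
  assumes X: "X \<in> carrier_mat a b" and Y: "Y \<in> carrier_mat b a" and XY: "X * Y = 1\<^sub>m a"
  shows "a \<le> b"
proof (rule ccontr)
  assume "\<not> a \<le> b"
  then have ba: "b < a" by simp
  define X' where "X' = mat a a (\<lambda>(i,j). if j < b then X $$ (i,j) else 0)"
  define Y' where "Y' = mat a a (\<lambda>(i,j). if i < b then Y $$ (i,j) else 0)"
  have X'c: "X' \<in> carrier_mat a a" and Y'c: "Y' \<in> carrier_mat a a"
    unfolding X'_def Y'_def by auto
  have "X' * Y' = X * Y"
  proof (rule eq_matI)
    fix i j assume "i < dim_row (X * Y)" "j < dim_col (X * Y)"
    then have ij: "i < a" "j < a" using X Y by auto
    have "(X' * Y') $$ (i,j) = (\<Sum>l<a. X' $$ (i,l) * Y' $$ (l,j))"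
      by (rule index_mult_mat_sum[OF X'c Y'c ij])
    also have "\<dots> = (\<Sum>l<b. X' $$ (i,l) * Y' $$ (l,j))"
      using ba ij by (intro sum.mono_neutral_right) (auto simp: X'_def)
    also have "\<dots> = (\<Sum>l<b. X $$ (i,l) * Y $$ (l,j))"
      using ij ba by (simp add: X'_def Y'_def)
    also have "\<dots> = (X * Y) $$ (i,j)"
      by (rule index_mult_mat_sum[OF X Y ij, symmetric])
    finally show "(X' * Y') $$ (i,j) = (X * Y) $$ (i,j)" .
  qed (use X Y X'c Y'c in auto)
  then have "invertible_mat X'" using invertible_matI[OF X'c Y'c] XY by simp
  moreover have "X' *\<^sub>v unit_vec a (a - 1) = 0\<^sub>v a"
    using X'c ba by (intro eq_vecI) (auto simp: scalar_prod_def X'_def)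
  moreover have "unit_vec a (a - 1) \<noteq> (0\<^sub>v a :: 'a vec)"
  proof
    assume "unit_vec a (a - 1) = (0\<^sub>v a :: 'a vec)"
    then have "unit_vec a (a - 1) $ (a - 1) = (0\<^sub>v a :: 'a vec) $ (a - 1)" by simp
    then show False using ba by simp
  qed
  ultimately show False using invertible_mat_iff_kernel[OF X'c] by auto
qed

lemma mat_inv:
  assumes B: "B \<in> carrier_mat k k" "invertible_mat B"
  shows "mat_inv B \<in> carrier_mat k k" "B * mat_inv B = 1\<^sub>m k" "mat_inv B * B = 1\<^sub>m k"
proof -
  have "\<exists>C. inverts_mat B C \<and> inverts_mat C B" using B(2) unfolding invertible_mat_def by auto
  then have "inverts_mat B (mat_inv B) \<and> inverts_mat (mat_inv B) B"
    unfolding mat_inv_def by (rule someI_ex)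
  then have "B * mat_inv B = 1\<^sub>m k" "mat_inv B * B = 1\<^sub>m (dim_row (mat_inv B))"
    using B(1) unfolding inverts_mat_def by auto
  moreover from arg_cong[OF this(1), of dim_col] arg_cong[OF this(2), of dim_col]
  have "mat_inv B \<in> carrier_mat k k" using B(1) by auto
  ultimately show "mat_inv B \<in> carrier_mat k k" "B * mat_inv B = 1\<^sub>m k" "mat_inv B * B = 1\<^sub>m k"
    by (auto simp: carrier_matD)
qed

lemma mat_inv_eqI:
  assumes B: "B \<in> carrier_mat k k" "invertible_mat B" and X: "X \<in> carrier_mat k k" "B * X = 1\<^sub>m k"
  shows "mat_inv B = X"
proof -
  have "mat_inv B = mat_inv B * (B * X)" using mat_inv(1)[OF B] X(2) by simp
  also have "\<dots> = (mat_inv B * B) * X" using mat_inv(1)[OF B] B(1) X(1) by simp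
  finally show ?thesis using mat_inv(3)[OF B] X(1) by simp
qed

abbreviation star_cong :: "'a :: conjugatable_field mat \<Rightarrow> 'a mat \<Rightarrow> 'a mat" where
  "star_cong S M \<equiv> mat_adjoint S * M * S"

lemma star_cong_carrier [simp]:
  "V \<in> carrier_mat n q \<Longrightarrow> M \<in> carrier_mat n n \<Longrightarrow> star_cong V M \<in> carrier_mat q q"
  by (metis adjoint_carrier mult_carrier_mat)

lemma star_cong_index:
  assumes "V \<in> carrier_mat n q" "M \<in> carrier_mat n n" "a < q" "b < q"
  shows "star_cong V M $$ (a,b) = (\<Sum>l<n. \<Sum>k<n. conjugate (V $$ (l,a)) * M $$ (l,k) * V $$ (k,b))"
proof -
  have "star_cong V M $$ (a,b) = (\<Sum>k<n. (\<Sum>l<n. conjugate (V $$ (l,a)) * M $$ (l,k)) * V $$ (k,b))"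
    using assms by (simp add: scalar_prod_def lessThan_atLeast0)
  also have "\<dots> = (\<Sum>k<n. \<Sum>l<n. conjugate (V $$ (l,a)) * M $$ (l,k) * V $$ (k,b))"
    by (simp add: sum_distrib_right)
  also have "\<dots> = (\<Sum>l<n. \<Sum>k<n. conjugate (V $$ (l,a)) * M $$ (l,k) * V $$ (k,b))"
    by (rule sum.swap)
  finally show ?thesis .
qed

lemma star_cong_index_cnj:
  fixes V :: "complex mat"
  assumes "V \<in> carrier_mat n q" "M \<in> carrier_mat n n" "a < q" "b < q"
  shows "star_cong V M $$ (a,b) = (\<Sum>l<n. \<Sum>k<n. cnj (V $$ (l,a)) * M $$ (l,k) * V $$ (k,b))"
  using star_cong_index[OF assms] by simp

lemma star_cong_mult:
  assumes V: "V \<in> carrier_mat n n" and W: "W \<in> carrier_mat n n" and M: "M \<in> carrier_mat n n"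
  shows "star_cong (V * W) M = star_cong W (star_cong V M)"
  using adjoint_mult[OF V W] assms
  by (simp add: assoc_mult_mat[of _ n n _ n _ n] mult_carrier_mat[of _ n n _ n])

lemma adjoint_star_cong:
  assumes W: "W \<in> carrier_mat n n" and M: "M \<in> carrier_mat n n"
  shows "mat_adjoint (star_cong W M) = star_cong W (mat_adjoint M)"
  using adjoint_mult[OF mult_carrier_mat[OF adjoint_carrier[OF W] M] W]
    adjoint_mult[OF adjoint_carrier[OF W] M] assms
  by (simp add: assoc_mult_mat[of _ n n _ n _ n] mult_carrier_mat[of _ n n _ n])

lemma star_cong_inverse:
  assumes W: "W \<in> carrier_mat n n" "W' \<in> carrier_mat n n" "W * W' = 1\<^sub>m n"
    and M: "M \<in> carrier_mat n n"
  shows "star_cong W' (star_cong W M) = M"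
proof -
  have "star_cong W' (star_cong W M) = star_cong (W * W') M"
    by (rule star_cong_mult[OF W(1,2) M, symmetric])
  then show ?thesis using W(3) M by simp
qed

section \<open>Diagonalizing twisted Hermitian matrices by *congruence\<close>

text \<open>\<open>twisted_hermitian n \<lambda> M\<close> says \<open>M = M\<^sup>* diag \<lambda>\<close>; for \<open>\<lambda> = 1\<close> this is Hermitian.
  \<open>commutes_with_diag n \<lambda> V\<close> says \<open>V diag \<lambda> = diag \<lambda> V\<close>; *congruence by such \<open>V\<close> preserves
  twisted hermiticity.\<close>
definition twisted_hermitian :: "nat \<Rightarrow> (nat \<Rightarrow> complex) \<Rightarrow> complex mat \<Rightarrow> bool" where
  "twisted_hermitian n lam M \<longleftrightarrow> (\<forall>i<n. \<forall>j<n. M $$ (i,j) = lam j * cnj (M $$ (j,i)))"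

definition commutes_with_diag :: "nat \<Rightarrow> (nat \<Rightarrow> complex) \<Rightarrow> complex mat \<Rightarrow> bool" where
  "commutes_with_diag n lam V \<longleftrightarrow> (\<forall>i<n. \<forall>j<n. V $$ (i,j) \<noteq> 0 \<longrightarrow> lam i = lam j)"

definition diagonal_outside :: "nat \<Rightarrow> nat set \<Rightarrow> 'a :: zero mat \<Rightarrow> bool" where
  "diagonal_outside n U M \<longleftrightarrow> (\<forall>a<n. \<forall>b<n. a \<noteq> b \<longrightarrow> (a \<notin> U \<or> b \<notin> U) \<longrightarrow> M $$ (a,b) = 0)"

definition identity_outside :: "nat \<Rightarrow> nat set \<Rightarrow> 'a :: zero_neq_one mat \<Rightarrow> bool" where
  "identity_outside n U V \<longleftrightarrow> (\<forall>a<n. \<forall>b<n. (a \<notin> U \<or> b \<notin> U) \<longrightarrow> V $$ (a,b) = (if a = b then 1 else 0))"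

lemma twisted_hermitian_level_eq:
  assumes M: "twisted_hermitian n lam M" and lam: "\<forall>i<n. cmod (lam i) = 1"
    and ij: "i < n" "j < n" "M $$ (i,j) \<noteq> 0"
  shows "lam i = lam j"
proof -
  have "M $$ (i,j) = lam j * cnj (lam i) * M $$ (i,j)"
    using M ij unfolding twisted_hermitian_def by (metis complex_cnj_cnj complex_cnj_mult mult.assoc)
  then have "lam j * cnj (lam i) = 1" using ij(3) by simp
  then have "lam j * (cnj (lam i) * lam i) = lam i" by (metis mult.assoc mult_1)
  moreover have "cnj (lam i) * lam i = 1"
    using lam ij(1) by (metis complex_norm_square mult.commute of_real_1 power_one)
  ultimately show ?thesis by simp
qed

lemma twisted_hermitian_star_cong:
  assumes M: "M \<in> carrier_mat n n" "twisted_hermitian n lam M"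
    and V: "V \<in> carrier_mat n n" "commutes_with_diag n lam V"
  shows "twisted_hermitian n lam (star_cong V M)"
  unfolding twisted_hermitian_def
proof (intro allI impI)
  fix a b assume ab: "a < n" "b < n"
  have "lam b * cnj (star_cong V M $$ (b,a)) =
      lam b * (\<Sum>l<n. \<Sum>k<n. V $$ (l,b) * cnj (M $$ (l,k)) * cnj (V $$ (k,a)))"
    by (subst star_cong_index_cnj[OF V(1) M(1) ab(2,1)]) (simp add: cnj_sum)
  also have "\<dots> = (\<Sum>l<n. \<Sum>k<n. lam b * (V $$ (l,b) * cnj (M $$ (l,k)) * cnj (V $$ (k,a))))"
    by (simp add: sum_distrib_left)
  also have "\<dots> = (\<Sum>l<n. \<Sum>k<n. cnj (V $$ (k,a)) * M $$ (k,l) * V $$ (l,b))"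
  proof (intro sum.cong refl)
    fix l k assume lk: "l \<in> {..<n}" "k \<in> {..<n}"
    show "lam b * (V $$ (l,b) * cnj (M $$ (l,k)) * cnj (V $$ (k,a))) =
        cnj (V $$ (k,a)) * M $$ (k,l) * V $$ (l,b)"
    proof (cases "V $$ (l,b) = 0")
      case False
      then have "lam l = lam b" using V(2) lk ab unfolding commutes_with_diag_def by auto
      moreover have "M $$ (k,l) = lam l * cnj (M $$ (l,k))"
        using M(2) lk unfolding twisted_hermitian_def by blast
      ultimately have "M $$ (k,l) = lam b * cnj (M $$ (l,k))" by simp
      then show ?thesis by (simp add: ac_simps)
    qed simp
  qed
  also have "\<dots> = star_cong V M $$ (a,b)"
    by (subst star_cong_index_cnj[OF V(1) M(1) ab]) (rule sum.swap)
  finally show "star_cong V M $$ (a,b) = lam b * cnj (star_cong V M $$ (b,a))" by (rule sym)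
qed

lemma commutes_with_diag_one [simp]: "commutes_with_diag n lam (1\<^sub>m n)"
  unfolding commutes_with_diag_def by auto

lemma commutes_with_diag_mult:
  assumes "V \<in> carrier_mat n n" "commutes_with_diag n lam V"
    and "W \<in> carrier_mat n n" "commutes_with_diag n lam W"
  shows "commutes_with_diag n lam (V * W)"
  unfolding commutes_with_diag_def
proof (intro allI impI)
  fix i j assume ij: "i < n" "j < n" "(V * W) $$ (i,j) \<noteq> 0"
  then have "(\<Sum>k<n. V $$ (i,k) * W $$ (k,j)) \<noteq> 0"
    using assms by (simp add: scalar_prod_def lessThan_atLeast0)
  then obtain k where k: "k < n" "V $$ (i,k) * W $$ (k,j) \<noteq> 0"
    by (meson lessThan_iff sum.neutral)
  then have "lam i = lam k" "lam k = lam j"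
    using assms(2,4) ij(1,2) unfolding commutes_with_diag_def by auto
  then show "lam i = lam j" by simp
qed

lemma diagonal_outside_star_cong:
  fixes M V :: "complex mat"
  assumes M: "M \<in> carrier_mat n n" "diagonal_outside n U M"
    and V: "V \<in> carrier_mat n n" "identity_outside n U V"
  shows "diagonal_outside n U (star_cong V M)"
  unfolding diagonal_outside_def
proof (intro allI impI)
  fix a b assume ab: "a < n" "b < n" "a \<noteq> b" "a \<notin> U \<or> b \<notin> U"
  have "star_cong V M $$ (a,b) = (\<Sum>l<n. \<Sum>k<n. cnj (V $$ (l,a)) * M $$ (l,k) * V $$ (k,b))"
    by (rule star_cong_index_cnj[OF V(1) M(1) ab(1,2)])
  also have "\<dots> = 0"
  proof (intro sum.neutral ballI)
    fix l k assume lk: "l \<in> {..<n}" "k \<in> {..<n}"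
    show "cnj (V $$ (l,a)) * M $$ (l,k) * V $$ (k,b) = 0"
    proof (cases "a \<notin> U")
      case True
      then have "V $$ (l,a) = (if l = a then 1 else 0)" "k = a \<Longrightarrow> V $$ (k,b) = 0"
        "l = a \<Longrightarrow> k \<noteq> a \<Longrightarrow> M $$ (l,k) = 0"
        using M(2) V(2) lk ab unfolding identity_outside_def diagonal_outside_def by auto
      then show ?thesis by (cases "l = a"; cases "k = a") auto
    next
      case False
      then have "b \<notin> U" using ab by auto
      then have "V $$ (k,b) = (if k = b then 1 else 0)" "l = b \<Longrightarrow> V $$ (l,a) = 0"
        "k = b \<Longrightarrow> l \<noteq> b \<Longrightarrow> M $$ (l,k) = 0"
        using M(2) V(2) lk ab unfolding identity_outside_def diagonal_outside_def by auto
      then show ?thesis by (cases "l = b"; cases "k = b") auto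
    qed
  qed
  finally show "star_cong V M $$ (a,b) = 0" .
qed

lemma invertible_mat_identity_but_row:
  fixes V :: "'a :: field mat"
  assumes V: "V \<in> carrier_mat n n" and p: "p < n" "V $$ (p,p) \<noteq> 0"
    and rows: "\<And>a b. a < n \<Longrightarrow> b < n \<Longrightarrow> a \<noteq> p \<Longrightarrow> V $$ (a,b) = (if a = b then 1 else 0)"
  shows "invertible_mat V"
  unfolding invertible_mat_iff_kernel[OF V]
proof (intro ballI impI)
  fix v :: "'a vec" assume v: "v \<in> carrier_vec n" and Vv: "V *\<^sub>v v = 0\<^sub>v n"
  have other: "v $ a = 0" if a: "a < n" "a \<noteq> p" for a
  proof -
    have "(V *\<^sub>v v) $ a = (\<Sum>b<n. V $$ (a,b) * v $ b)" by (rule index_mult_mat_vec_sum[OF V v a(1)])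
    also have "\<dots> = v $ a" by (subst sum_lessThan_single[OF a(1)]) (use a rows in auto)
    finally show ?thesis using Vv a by simp
  qed
  have "(V *\<^sub>v v) $ p = (\<Sum>b<n. V $$ (p,b) * v $ b)" by (rule index_mult_mat_vec_sum[OF V v p(1)])
  also have "\<dots> = V $$ (p,p) * v $ p" by (rule sum_lessThan_single[OF p(1)]) (use other in auto)
  finally have "v $ p = 0" using Vv p by simp
  with other show "v = 0\<^sub>v n" using v by (intro eq_vecI) auto
qed

definition pivot_elim_mat :: "nat \<Rightarrow> nat set \<Rightarrow> nat \<Rightarrow> complex mat \<Rightarrow> complex mat" where
  "pivot_elim_mat n U p M = mat n n (\<lambda>(a,b).
     if a = b then 1 else if a = p \<and> b \<in> U then - (M $$ (p,b) / M $$ (p,p)) else 0)"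

lemma pivot_elim_mat_index:
  "a < n \<Longrightarrow> b < n \<Longrightarrow> pivot_elim_mat n U p M $$ (a,b) =
     (if a = b then 1 else if a = p \<and> b \<in> U then - (M $$ (p,b) / M $$ (p,p)) else 0)"
  unfolding pivot_elim_mat_def by simp

lemma star_cong_pivot_elim_row:
  assumes M: "M \<in> carrier_mat n n" "diagonal_outside n U M" "M $$ (p,p) \<noteq> 0"
    and p: "p \<in> U" "U \<subseteq> {..<n}" and b: "b < n" "b \<noteq> p"
  shows "star_cong (pivot_elim_mat n U p M) M $$ (p,b) = 0"
proof -
  define V where "V = pivot_elim_mat n U p M"
  have Vc: "V \<in> carrier_mat n n" unfolding V_def pivot_elim_mat_def by simp
  have pn: "p < n" using p by auto
  have Ve: "V $$ (a,b) = (if a = b then 1 else if a = p \<and> b \<in> U then - (M $$ (p,b) / M $$ (p,p)) else 0)"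
    if "a < n" "b < n" for a b unfolding V_def using that by (rule pivot_elim_mat_index)
  have "star_cong V M $$ (p,b) = (\<Sum>l<n. \<Sum>k<n. cnj (V $$ (l,p)) * M $$ (l,k) * V $$ (k,b))"
    by (rule star_cong_index_cnj[OF Vc M(1) pn b(1)])
  also have "\<dots> = (\<Sum>k<n. cnj (V $$ (p,p)) * M $$ (p,k) * V $$ (k,b))"
    by (rule sum_lessThan_single[OF pn]) (use Ve pn in auto)
  also have "\<dots> = (\<Sum>k<n. M $$ (p,k) * V $$ (k,b))" using Ve pn by simp
  also have "\<dots> = M $$ (p,b) * V $$ (b,b) + M $$ (p,p) * V $$ (p,b)"
    by (rule sum_lessThan_pair[OF b(1) pn b(2)]) (use Ve b in auto)
  also have "\<dots> = 0"
  proof (cases "b \<in> U")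
    case True
    then show ?thesis using Ve b pn M(3) by simp
  next
    case False
    then have "M $$ (p,b) = 0" using M(2) b pn unfolding diagonal_outside_def by auto
    then show ?thesis using Ve b pn False by simp
  qed
  finally show ?thesis unfolding V_def .
qed

lemma commutes_with_diag_pivot_elim_mat:
  assumes M: "twisted_hermitian n lam M" and lam: "\<forall>i<n. cmod (lam i) = 1" and p: "p < n"
  shows "commutes_with_diag n lam (pivot_elim_mat n U p M)"
  unfolding commutes_with_diag_def
proof (intro allI impI)
  fix i j assume ij: "i < n" "j < n" "pivot_elim_mat n U p M $$ (i,j) \<noteq> 0"
  show "lam i = lam j"
  proof (cases "i = j")
    case False
    then have "i = p" "M $$ (p,j) \<noteq> 0"
      using ij pivot_elim_mat_index[OF ij(1,2), of U p M] by (auto split: if_splits)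
    then show ?thesis using twisted_hermitian_level_eq[OF M lam p ij(2)] by simp
  qed simp
qed

lemma clear_pivot:
  assumes M: "M \<in> carrier_mat n n" "twisted_hermitian n lam M" "diagonal_outside n U M"
    "M $$ (p,p) \<noteq> 0"
    and lam: "\<forall>i<n. cmod (lam i) = 1" and p: "p \<in> U" "U \<subseteq> {..<n}"
  shows "\<exists>V \<in> carrier_mat n n. invertible_mat V \<and> commutes_with_diag n lam V
    \<and> diagonal_outside n (U - {p}) (star_cong V M)"
proof -
  define V where "V = pivot_elim_mat n U p M"
  have pn: "p < n" using p by auto
  have Ve: "V $$ (a,b) = (if a = b then 1 else if a = p \<and> b \<in> U then - (M $$ (p,b) / M $$ (p,p)) else 0)"
    if "a < n" "b < n" for a b unfolding V_def using that by (rule pivot_elim_mat_index)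
  have Vc: "V \<in> carrier_mat n n" unfolding V_def pivot_elim_mat_def by simp
  have "invertible_mat V"
    by (rule invertible_mat_identity_but_row[OF Vc pn]) (use Ve pn in auto)
  moreover have "commutes_with_diag n lam V"
    unfolding V_def by (rule commutes_with_diag_pivot_elim_mat[OF M(2) lam pn])
  moreover have "diagonal_outside n (U - {p}) (star_cong V M)"
    unfolding diagonal_outside_def
  proof (intro allI impI)
    fix a b assume ab: "a < n" "b < n" "a \<noteq> b" "a \<notin> U - {p} \<or> b \<notin> U - {p}"
    have "identity_outside n U V" unfolding identity_outside_def using Ve p(1) by auto
    then have "diagonal_outside n U (star_cong V M)"
      using diagonal_outside_star_cong[OF M(1,3) Vc] by blast
    moreover have row: "star_cong V M $$ (p,c) = 0" if "c < n" "c \<noteq> p" for c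
      unfolding V_def by (rule star_cong_pivot_elim_row[OF M(1,3,4) p that])
    moreover have "star_cong V M $$ (c,p) = 0" if "c < n" "c \<noteq> p" for c
    proof -
      have "twisted_hermitian n lam (star_cong V M)"
        by (rule twisted_hermitian_star_cong[OF M(1,2) Vc \<open>commutes_with_diag n lam V\<close>])
      then have "star_cong V M $$ (c,p) = lam p * cnj (star_cong V M $$ (p,c))"
        using that pn unfolding twisted_hermitian_def by blast
      then show ?thesis using row[OF that] by simp
    qed
    ultimately show "star_cong V M $$ (a,b) = 0"
      using ab unfolding diagonal_outside_def by (cases "a \<notin> U \<or> b \<notin> U") auto
  qed
  ultimately show ?thesis using Vc by blast
qed

definition transvection_mat :: "nat \<Rightarrow> nat \<Rightarrow> nat \<Rightarrow> complex \<Rightarrow> complex mat" where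
  "transvection_mat n j i c = mat n n (\<lambda>(a,b). if a = b then 1 else if a = j \<and> b = i then c else 0)"

lemma transvection_mat_index:
  "a < n \<Longrightarrow> b < n \<Longrightarrow>
    transvection_mat n j i c $$ (a,b) = (if a = b then 1 else if a = j \<and> b = i then c else 0)"
  unfolding transvection_mat_def by simp

lemma star_cong_transvection_pivot:
  assumes M: "M \<in> carrier_mat n n" "M $$ (i,i) = 0" "M $$ (j,j) = 0"
    and ij: "i < n" "j < n" "i \<noteq> j"
  shows "star_cong (transvection_mat n j i c) M $$ (i,i) = M $$ (i,j) * c + cnj c * M $$ (j,i)"
proof -
  define V where "V = transvection_mat n j i c"
  have Vc: "V \<in> carrier_mat n n" unfolding V_def transvection_mat_def by simp
  have Ve: "V $$ (a,b) = (if a = b then 1 else if a = j \<and> b = i then c else 0)"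
    if "a < n" "b < n" for a b unfolding V_def using that by (rule transvection_mat_index)
  have "star_cong V M $$ (i,i) = (\<Sum>l<n. \<Sum>k<n. cnj (V $$ (l,i)) * M $$ (l,k) * V $$ (k,i))"
    by (rule star_cong_index_cnj[OF Vc M(1) ij(1,1)])
  also have "\<dots> = (\<Sum>k<n. cnj (V $$ (i,i)) * M $$ (i,k) * V $$ (k,i))
      + (\<Sum>k<n. cnj (V $$ (j,i)) * M $$ (j,k) * V $$ (k,i))"
    by (rule sum_lessThan_pair[OF ij]) (use Ve ij in auto)
  also have "(\<Sum>k<n. cnj (V $$ (i,i)) * M $$ (i,k) * V $$ (k,i)) =
      cnj (V $$ (i,i)) * M $$ (i,i) * V $$ (i,i) + cnj (V $$ (i,i)) * M $$ (i,j) * V $$ (j,i)"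
    by (rule sum_lessThan_pair[OF ij]) (use Ve ij in auto)
  also have "(\<Sum>k<n. cnj (V $$ (j,i)) * M $$ (j,k) * V $$ (k,i)) =
      cnj (V $$ (j,i)) * M $$ (j,i) * V $$ (i,i) + cnj (V $$ (j,i)) * M $$ (j,j) * V $$ (j,i)"
    by (rule sum_lessThan_pair[OF ij]) (use Ve ij in auto)
  finally show ?thesis unfolding V_def[symmetric] using Ve ij M(2,3) by simp
qed

text \<open>If all diagonal entries vanish, a transvection produces the pivot
  \<open>x + \<lambda>\<^sub>i cnj x\<close>, which is nonzero for \<open>x = 1\<close> unless \<open>\<lambda>\<^sub>i = -1\<close>, and then for \<open>x = \<i>\<close>.\<close>
lemma make_pivot:
  assumes M: "M \<in> carrier_mat n n" "twisted_hermitian n lam M"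
    and lam: "\<forall>i<n. cmod (lam i) = 1"
    and U: "i \<in> U" "j \<in> U" "U \<subseteq> {..<n}" and ij: "i \<noteq> j"
    and entries: "M $$ (i,j) \<noteq> 0" "M $$ (i,i) = 0" "M $$ (j,j) = 0"
  shows "\<exists>V \<in> carrier_mat n n. invertible_mat V \<and> commutes_with_diag n lam V
    \<and> identity_outside n U V \<and> star_cong V M $$ (i,i) \<noteq> 0"
proof -
  have i: "i < n" and j: "j < n" using U by auto
  define x where "x = (if lam i = -1 then \<i> else 1)"
  define V where "V = transvection_mat n j i (x / M $$ (i,j))"
  have Vc: "V \<in> carrier_mat n n" unfolding V_def transvection_mat_def by simp
  note Ve = transvection_mat_index[where n = n and c = "x / M $$ (i,j)" and i = i and j = j, folded V_def]
  have "invertible_mat V" by (rule invertible_mat_identity_but_row[OF Vc j]) (use Ve j in auto)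
  moreover have "commutes_with_diag n lam V"
    using Ve twisted_hermitian_level_eq[OF M(2) lam i j entries(1)]
    unfolding commutes_with_diag_def by (auto split: if_splits)
  moreover have "identity_outside n U V" unfolding identity_outside_def using Ve U by auto
  moreover have "star_cong V M $$ (i,i) = x + lam i * cnj x"
  proof -
    have "M $$ (j,i) = lam i * cnj (M $$ (i,j))"
      using M(2) i j unfolding twisted_hermitian_def by blast
    then show ?thesis unfolding V_def star_cong_transvection_pivot[OF M(1) entries(2,3) i j ij]
      using entries(1) by (simp add: field_simps)
  qed
  moreover have "x + lam i * cnj x \<noteq> 0"
  proof (cases "lam i = -1")
    case False
    then have "1 + lam i \<noteq> 0" by (metis add.commute add_eq_0_iff)
    then show ?thesis using False unfolding x_def by simp
  qed (simp add: x_def)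
  ultimately show ?thesis using Vc by auto
qed

lemma exists_pivot:
  assumes M: "M \<in> carrier_mat n n" "twisted_hermitian n lam M" "diagonal_outside n U M"
    "\<not> diagonal_mat M"
    and lam: "\<forall>i<n. cmod (lam i) = 1" and U: "U \<subseteq> {..<n}"
  obtains p V where "p \<in> U" "V \<in> carrier_mat n n" "invertible_mat V" "commutes_with_diag n lam V"
    "identity_outside n U V" "star_cong V M $$ (p,p) \<noteq> 0"
proof (cases "\<exists>p \<in> U. M $$ (p,p) \<noteq> 0")
  case True
  then obtain p where "p \<in> U" "M $$ (p,p) \<noteq> 0" by blast
  moreover have "identity_outside n U (1\<^sub>m n :: complex mat)"
    unfolding identity_outside_def by simp
  moreover have "invertible_mat (1\<^sub>m n :: complex mat)"
    using invertible_matI[of "1\<^sub>m n" n "1\<^sub>m n"] by simp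
  ultimately show ?thesis using that[of p "1\<^sub>m n"] M(1) by simp
next
  case False
  obtain i j where ij: "i < n" "j < n" "i \<noteq> j" "M $$ (i,j) \<noteq> 0"
    using M(1,4) unfolding diagonal_mat_def by auto
  then have "i \<in> U" "j \<in> U" using M(3) unfolding diagonal_outside_def by blast+
  with False show ?thesis
    using make_pivot[OF M(1,2) lam _ _ U ij(3,4)] that by blast
qed

lemma twisted_hermitian_diagonalization:
  assumes "M \<in> carrier_mat n n" "twisted_hermitian n lam M" "diagonal_outside n U M"
    and lam: "\<forall>i<n. cmod (lam i) = 1" and "U \<subseteq> {..<n}"
  shows "\<exists>V \<in> carrier_mat n n. invertible_mat V \<and> commutes_with_diag n lam V
    \<and> diagonal_mat (star_cong V M)"
  using assms(1-3,5)
proof (induction "card U" arbitrary: U M rule: less_induct)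
  case less
  note M = less.prems(1-3) and U = less.prems(4)
  show ?case
  proof (cases "diagonal_mat M")
    case True
    then show ?thesis using M(1) invertible_matI[of "1\<^sub>m n" n "1\<^sub>m n"]
      by (intro bexI[of _ "1\<^sub>m n"]) auto
  next
    case False
    obtain p V1 where V1: "p \<in> U" "V1 \<in> carrier_mat n n" "invertible_mat V1"
      "commutes_with_diag n lam V1" "identity_outside n U V1" "star_cong V1 M $$ (p,p) \<noteq> 0"
      using exists_pivot[OF M False lam U] .
    define M1 where "M1 = star_cong V1 M"
    have M1: "M1 \<in> carrier_mat n n" "twisted_hermitian n lam M1" "diagonal_outside n U M1"
      unfolding M1_def using V1 M twisted_hermitian_star_cong diagonal_outside_star_cong by auto
    obtain V2 where V2: "V2 \<in> carrier_mat n n" "invertible_mat V2" "commutes_with_diag n lam V2"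
      "diagonal_outside n (U - {p}) (star_cong V2 M1)"
      using clear_pivot[OF M1 V1(6)[folded M1_def] lam V1(1) U] by blast
    have "card (U - {p}) < card U"
      using V1(1) U by (intro card_Diff1_less) (auto intro: finite_subset)
    then obtain V3 where V3: "V3 \<in> carrier_mat n n" "invertible_mat V3" "commutes_with_diag n lam V3"
      "diagonal_mat (star_cong V3 (star_cong V2 M1))"
      using less.hyps[of "U - {p}" "star_cong V2 M1"] M1 V2 U twisted_hermitian_star_cong by auto
    have "star_cong (V1 * V2 * V3) M = star_cong V3 (star_cong V2 M1)"
      unfolding M1_def using V1(2) V2(1) V3(1) M(1) by (simp add: star_cong_mult)
    then show ?thesis using V1 V2 V3
      by (intro bexI[of _ "V1 * V2 * V3"]) (auto simp: invertible_mat_mult commutes_with_diag_mult)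
  qed
qed

lemma twisted_hermitian_diagonalizable:
  assumes "M \<in> carrier_mat n n" "twisted_hermitian n lam M" "\<forall>i<n. cmod (lam i) = 1"
  shows "\<exists>V \<in> carrier_mat n n. invertible_mat V \<and> diagonal_mat (star_cong V M)"
  using twisted_hermitian_diagonalization[OF assms(1,2) _ assms(3), of "{..<n}"]
  unfolding diagonal_outside_def by blast

section \<open>The *cosquare\<close>

lemma eigenvalue_similar_diagonal:
  fixes C D :: "'a :: field mat"
  assumes C: "C \<in> carrier_mat n n" and sim: "similar_mat C D" and D: "diagonal_mat D"
  shows "eigenvalue C z \<longleftrightarrow> (\<exists>i<n. z = D $$ (i,i))"
proof -
  have Dc: "D \<in> carrier_mat n n" using similar_matD[OF sim] C by auto
  have "eigenvalue C z \<longleftrightarrow> poly (char_poly D) z = 0"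
    unfolding eigenvalue_root_char_poly[OF C] char_poly_similar[OF sim] ..
  also have "char_poly D = (\<Prod>a \<leftarrow> diag_mat D. [:- a, 1:])"
    by (rule char_poly_upper_triangular[OF Dc diagonal_imp_upper_triangular[OF Dc D]])
  also have "poly \<dots> z = 0 \<longleftrightarrow> z \<in> set (diag_mat D)"
    by (force simp: poly_prod_list prod_list_zero_iff o_def)
  also have "\<dots> \<longleftrightarrow> (\<exists>i<n. z = D $$ (i,i))"
    using Dc by (auto simp: diag_mat_def)
  finally show ?thesis .
qed

lemma mult_cancel_inverse_left:
  fixes A B C :: "'a :: semiring_1 mat"
  assumes "A \<in> carrier_mat n n" "B \<in> carrier_mat n n" "C \<in> carrier_mat n m" "A * B = 1\<^sub>m n"
  shows "A * (B * C) = C"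
  using assms assoc_mult_mat[of A n n B n C m, symmetric] by simp

lemma invertible_star_cong:
  fixes M :: "'a :: conjugatable_field mat"
  assumes M: "M \<in> carrier_mat n n" "invertible_mat M" and V: "V \<in> carrier_mat n n" "invertible_mat V"
  shows "invertible_mat (star_cong V M)"
proof -
  have "invertible_mat (mat_adjoint V * M)"
    by (rule invertible_mat_mult[OF adjoint_carrier[OF V(1)] invertible_mat_adjoint[OF V] M])
  then show ?thesis
    by (rule invertible_mat_mult[OF mult_carrier_mat[OF adjoint_carrier[OF V(1)] M(1)] _ V])
qed

lemma cosquare_carrier [simp]:
  "B \<in> carrier_mat k k \<Longrightarrow> invertible_mat B \<Longrightarrow> cosquare B \<in> carrier_mat k k"
  unfolding cosquare_def using mat_inv(1) by (metis adjoint_carrier mult_carrier_mat)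

lemma adjoint_mult_cosquare:
  assumes B: "B \<in> carrier_mat k k" "invertible_mat B"
  shows "mat_adjoint B * cosquare B = B"
proof -
  have Bi: "mat_inv B \<in> carrier_mat k k" "mat_inv B * B = 1\<^sub>m k" using mat_inv[OF B] by auto
  have "mat_adjoint B * mat_adjoint (mat_inv B) = 1\<^sub>m k"
    using adjoint_mult[OF Bi(1) B(1)] Bi(2) by simp
  then show ?thesis unfolding cosquare_def
    using B(1) Bi(1) by (simp add: mult_cancel_inverse_left[of _ k _ _ k])
qed

lemma cosquare_star_cong:
  assumes B: "B \<in> carrier_mat k k" "invertible_mat B" and R: "R \<in> carrier_mat k k" "invertible_mat R"
  shows "cosquare (star_cong R B) = mat_inv R * cosquare B * R"
proof -
  define Ri Bi where "Ri = mat_inv R" and "Bi = mat_inv B"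
  have Ri: "Ri \<in> carrier_mat k k" "R * Ri = 1\<^sub>m k" "Ri * R = 1\<^sub>m k" unfolding Ri_def using mat_inv[OF R] by auto
  have Bi: "Bi \<in> carrier_mat k k" "B * Bi = 1\<^sub>m k" unfolding Bi_def using mat_inv[OF B] by auto
  have "mat_adjoint R * mat_adjoint Ri = 1\<^sub>m k"
    using adjoint_mult[OF Ri(1) R(1)] unfolding Ri(3) by simp
  moreover have "mat_adjoint Ri * mat_adjoint R = 1\<^sub>m k"
    using adjoint_mult[OF R(1) Ri(1)] unfolding Ri(2) by simp
  ultimately have aR: "mat_adjoint R \<in> carrier_mat k k" "mat_adjoint Ri \<in> carrier_mat k k"
    "mat_adjoint R * mat_adjoint Ri = 1\<^sub>m k" "mat_adjoint Ri * mat_adjoint R = 1\<^sub>m k"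
    using R(1) Ri(1) by auto
  have C: "star_cong R B \<in> carrier_mat k k" "invertible_mat (star_cong R B)"
    using B(1) R(1) invertible_star_cong[OF B R] by auto
  define X where "X = Ri * Bi * mat_adjoint Ri"
  have Xc: "X \<in> carrier_mat k k" unfolding X_def using Ri(1) Bi(1) by (intro mult_carrier_mat) auto
  have "star_cong R B * X = 1\<^sub>m k"
    unfolding X_def using B(1) R(1) Ri Bi aR
    by (simp add: assoc_mult_mat[of _ k k _ k _ k] mult_carrier_mat[of _ k k _ k] mult_cancel_inverse_left[of _ k _ _ k])
  then have "mat_inv (star_cong R B) = X" by (rule mat_inv_eqI[OF C Xc])
  moreover have "mat_adjoint X = Ri * mat_adjoint Bi * mat_adjoint Ri"
    unfolding X_def adjoint_mult[OF mult_carrier_mat[OF Ri(1) Bi(1)] aR(2)] adjoint_mult[OF Ri(1) Bi(1)]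
    using Ri(1) Bi(1) by (simp add: assoc_mult_mat[of _ k k _ k _ k])
  ultimately show ?thesis
    unfolding cosquare_def Ri_def[symmetric] Bi_def[symmetric] using B(1) R(1) Ri Bi(1) aR
    by (simp add: assoc_mult_mat[of _ k k _ k _ k] mult_carrier_mat[of _ k k _ k] mult_cancel_inverse_left[of _ k _ _ k])
qed

lemma cosquare_diagonal:
  assumes D: "D \<in> carrier_mat k k" "diagonal_mat D" "invertible_mat D"
  shows "cosquare D = mat k k (\<lambda>(i,j). if i = j then D $$ (i,i) / cnj (D $$ (i,i)) else 0)"
proof -
  define Di where "Di = mat k k (\<lambda>(i,j). if i = j then 1 / D $$ (i,i) else (0 :: complex))"
  have Dic: "Di \<in> carrier_mat k k" unfolding Di_def by simp
  have nz: "D $$ (i,i) \<noteq> 0" if "i < k" for i using D invertible_diagonal_mat_iff that by blast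
  have "D * Di = 1\<^sub>m k"
  proof (rule eq_matI)
    fix i j assume "i < dim_row (1\<^sub>m k :: complex mat)" "j < dim_col (1\<^sub>m k :: complex mat)"
    then have ij: "i < k" "j < k" by auto
    have "(D * Di) $$ (i,j) = (\<Sum>l<k. D $$ (i,l) * Di $$ (l,j))" by (rule index_mult_mat_sum[OF D(1) Dic ij])
    also have "\<dots> = D $$ (i,i) * Di $$ (i,j)"
      by (rule sum_lessThan_single[OF ij(1)]) (use D(1,2) ij in \<open>auto simp: diagonal_mat_def\<close>)
    finally show "(D * Di) $$ (i,j) = 1\<^sub>m k $$ (i,j)" using ij nz by (simp add: Di_def)
  qed (use D(1) Dic in auto)
  then have "mat_inv D = Di" by (rule mat_inv_eqI[OF D(1,3) Dic])
  then show ?thesis unfolding cosquare_def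
  proof (intro eq_matI)
    fix i j assume ij: "i < dim_row (mat k k (\<lambda>(i,j). if i = j then D $$ (i,i) / cnj (D $$ (i,i)) else 0))"
      "j < dim_col (mat k k (\<lambda>(i,j). if i = j then D $$ (i,i) / cnj (D $$ (i,i)) else 0))"
    then have ij: "i < k" "j < k" by auto
    have "(mat_adjoint Di * D) $$ (i,j) = (\<Sum>l<k. cnj (Di $$ (l,i)) * D $$ (l,j))"
      using index_mult_mat_sum[OF adjoint_carrier[OF Dic] D(1) ij] Dic ij by simp
    also have "\<dots> = cnj (Di $$ (i,i)) * D $$ (i,j)"
      by (rule sum_lessThan_single[OF ij(1)]) (use ij in \<open>auto simp: Di_def\<close>)
    finally show "(mat_adjoint (mat_inv D) * D) $$ (i,j) =
        mat k k (\<lambda>(i,j). if i = j then D $$ (i,i) / cnj (D $$ (i,i)) else 0) $$ (i,j)"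
      using ij D(1,2) \<open>mat_inv D = Di\<close> unfolding diagonal_mat_def by (auto simp: Di_def divide_inverse)
  qed (use D(1) Dic in auto)
qed

lemma cosquare_of_diagonalizable_by_star_cong:
  assumes B: "B \<in> carrier_mat k k" "invertible_mat B"
    and R: "R \<in> carrier_mat k k" "invertible_mat R" "diagonal_mat (star_cong R B)"
  shows "diagonalizable_mat (cosquare B) \<and> (\<forall>z. eigenvalue (cosquare B) z \<longrightarrow> cmod z = 1)"
proof -
  define \<Delta> where "\<Delta> = star_cong R B"
  have \<Delta>: "\<Delta> \<in> carrier_mat k k" "diagonal_mat \<Delta>" "invertible_mat \<Delta>"
    unfolding \<Delta>_def using B(1) R invertible_star_cong[OF B R(1,2)] by auto
  define D where "D = mat k k (\<lambda>(i,j). if i = j then \<Delta> $$ (i,i) / cnj (\<Delta> $$ (i,i)) else 0)"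
  have D: "D \<in> carrier_mat k k" "diagonal_mat D" unfolding D_def diagonal_mat_def by auto
  have "cosquare \<Delta> = mat_inv R * cosquare B * R"
    unfolding \<Delta>_def by (rule cosquare_star_cong[OF B R(1,2)])
  then have "similar_mat (cosquare \<Delta>) (cosquare B)"
    using mat_inv[OF R(1,2)] B R(1) \<Delta>(1,3)
    by (intro similar_matI[where P = "mat_inv R" and Q = R and n = k]) auto
  then have sim: "similar_mat (cosquare B) D"
    unfolding cosquare_diagonal[OF \<Delta>] D_def[symmetric] by (rule similar_mat_sym)
  have "cmod z = 1" if "eigenvalue (cosquare B) z" for z
  proof -
    have "\<exists>i<k. z = D $$ (i,i)"
      using eigenvalue_similar_diagonal[OF cosquare_carrier[OF B] sim D(2)] that by simp
    then obtain i where i: "i < k" "z = D $$ (i,i)" by blast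
    moreover have "\<Delta> $$ (i,i) \<noteq> 0" using \<Delta> invertible_diagonal_mat_iff i(1) by blast
    ultimately show ?thesis by (simp add: D_def norm_divide)
  qed
  moreover have "diagonalizable_mat (cosquare B)"
    unfolding diagonalizable_mat_def using D sim cosquare_carrier[OF B] by auto
  ultimately show ?thesis by blast
qed

lemma twisted_hermitian_adjoint_mult_diagonal:
  assumes M: "M \<in> carrier_mat n n" "M = mat_adjoint M * D"
    and D: "D \<in> carrier_mat n n" "diagonal_mat D"
  shows "twisted_hermitian n (\<lambda>i. D $$ (i,i)) M"
  unfolding twisted_hermitian_def
proof (intro allI impI)
  fix i j assume ij: "i < n" "j < n"
  have "M $$ (i,j) = (mat_adjoint M * D) $$ (i,j)" using M(2) by metis
  also have "\<dots> = (\<Sum>l<n. mat_adjoint M $$ (i,l) * D $$ (l,j))"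
    by (rule index_mult_mat_sum[OF adjoint_carrier[OF M(1)] D(1) ij])
  also have "\<dots> = mat_adjoint M $$ (i,j) * D $$ (j,j)"
    by (rule sum_lessThan_single[OF ij(2)]) (use D ij in \<open>auto simp: diagonal_mat_def\<close>)
  finally show "M $$ (i,j) = D $$ (j,j) * cnj (M $$ (j,i))" using M(1) ij by simp
qed

lemma star_cong_diagonal_of_cosquare:
  assumes B: "B \<in> carrier_mat k k" "invertible_mat B"
    and diag: "diagonalizable_mat (cosquare B)"
    and unimodular: "\<forall>z. eigenvalue (cosquare B) z \<longrightarrow> cmod z = 1"
  shows "\<exists>R \<in> carrier_mat k k. invertible_mat R \<and> diagonal_mat (star_cong R B)"
proof -
  define C where "C = cosquare B"
  have Cc: "C \<in> carrier_mat k k" unfolding C_def using B by simp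
  obtain D where D: "D \<in> carrier_mat k k" "diagonal_mat D" "similar_mat C D"
    using diag Cc unfolding diagonalizable_mat_def C_def by auto
  then obtain P Q where P: "P \<in> carrier_mat k k" "Q \<in> carrier_mat k k" "P * Q = 1\<^sub>m k" "Q * P = 1\<^sub>m k"
    and CPDQ: "C = P * D * Q"
    using similar_matD[OF D(3)] Cc by auto
  have lam: "\<forall>i<k. cmod (D $$ (i,i)) = 1"
    using eigenvalue_similar_diagonal[OF Cc D(3,2)] unimodular unfolding C_def by auto
  define B' where "B' = star_cong P B"
  have B'c: "B' \<in> carrier_mat k k" unfolding B'_def using P(1) B(1) by simp
  have "B' = mat_adjoint P * (mat_adjoint B * C) * P"
    unfolding B'_def C_def using adjoint_mult_cosquare[OF B] by simp
  also have "\<dots> = mat_adjoint P * mat_adjoint B * P * D * (Q * P)"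
    unfolding CPDQ using P(1,2) D(1) B(1)
    by (simp add: assoc_mult_mat[of _ k k _ k _ k] mult_carrier_mat[of _ k k _ k])
  also have "\<dots> = mat_adjoint B' * D"
    unfolding P(4) B'_def adjoint_star_cong[OF P(1) B(1)] using P(1) B(1) D(1) by simp
  finally have "twisted_hermitian k (\<lambda>i. D $$ (i,i)) B'"
    by (rule twisted_hermitian_adjoint_mult_diagonal[OF B'c _ D(1,2)])
  then obtain V where V: "V \<in> carrier_mat k k" "invertible_mat V" "diagonal_mat (star_cong V B')"
    using twisted_hermitian_diagonalizable[OF B'c _ lam] by blast
  have "invertible_mat P" by (rule invertible_matI[OF P(1,2,3)])
  moreover have "star_cong (P * V) B = star_cong V B'"
    unfolding B'_def by (rule star_cong_mult[OF P(1) V(1) B(1)])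
  ultimately show ?thesis using P(1) V invertible_mat_mult
    by (intro bexI[of _ "P * V"]) auto
qed

section \<open>Kernels of \<open>A\<close> and \<open>A\<^sup>*\<close>\<close>

lemma mult_mat_vec_zero [simp]: "A \<in> carrier_mat n m \<Longrightarrow> A *\<^sub>v 0\<^sub>v m = 0\<^sub>v n"
  by (intro eq_vecI) (auto simp: scalar_prod_def)

lemma zero_mat_mult_vec [simp]: "v \<in> carrier_vec m \<Longrightarrow> 0\<^sub>m n m *\<^sub>v v = 0\<^sub>v n"
  by (intro eq_vecI) (auto simp: scalar_prod_def)

lemma zero_vec_iff_index: "v \<in> carrier_vec n \<Longrightarrow> v = 0\<^sub>v n \<longleftrightarrow> (\<forall>i<n. v $ i = 0)"
  by auto

lemma diagonal_mult_vec_zero_iff_adjoint: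
  fixes D :: "'a :: conjugatable_field mat"
  assumes D: "D \<in> carrier_mat n n" "diagonal_mat D" and u: "u \<in> carrier_vec n"
  shows "D *\<^sub>v u = 0\<^sub>v n \<longleftrightarrow> mat_adjoint D *\<^sub>v u = 0\<^sub>v n"
proof -
  have "(D *\<^sub>v u) $ a = 0 \<longleftrightarrow> (mat_adjoint D *\<^sub>v u) $ a = 0" if "a < n" for a
    using diagonal_mult_mat_vec[OF D u that] D(1) that
      diagonal_mult_mat_vec[OF adjoint_carrier[OF D(1)] diagonal_mat_adjoint[OF D(2)] u that]
    by simp
  moreover have "D *\<^sub>v u \<in> carrier_vec n" "mat_adjoint D *\<^sub>v u \<in> carrier_vec n"
    using mult_mat_vec_carrier[OF D(1) u] mult_mat_vec_carrier[OF adjoint_carrier[OF D(1)] u] .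
  ultimately show ?thesis using zero_vec_iff_index by blast
qed

lemma mult_vec_zero_iff_star_cong:
  fixes W :: "'a :: conjugatable_field mat"
  assumes W: "W \<in> carrier_mat n n" "invertible_mat W" "W' \<in> carrier_mat n n" "W * W' = 1\<^sub>m n"
    and M: "M \<in> carrier_mat n n" and v: "v \<in> carrier_vec n"
  shows "M *\<^sub>v v = 0\<^sub>v n \<longleftrightarrow> star_cong W M *\<^sub>v (W' *\<^sub>v v) = 0\<^sub>v n"
proof -
  have "W *\<^sub>v (W' *\<^sub>v v) = v" using assoc_mult_mat_vec[OF W(1,3) v, symmetric] W(4) v by simp
  then have "star_cong W M *\<^sub>v (W' *\<^sub>v v) = mat_adjoint W *\<^sub>v (M *\<^sub>v v)"
    using W(1,3) M v by (simp add: assoc_mult_mat_vec[of _ n n _ n] mult_carrier_mat[of _ n n _ n])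
  moreover have "mat_adjoint W *\<^sub>v (M *\<^sub>v v) = 0\<^sub>v n \<longleftrightarrow> M *\<^sub>v v = 0\<^sub>v n"
    using invertible_mat_adjoint[OF W(1,2)] invertible_mat_iff_kernel[OF adjoint_carrier[OF W(1)]] W(1) M v
    by auto
  ultimately show ?thesis by simp
qed

lemma kernel_adjoint_of_diagonal_star_cong:
  fixes M :: "'a :: conjugatable_field mat"
  assumes W: "W \<in> carrier_mat n n" "invertible_mat W" and M: "M \<in> carrier_mat n n"
    and diag: "diagonal_mat (star_cong W M)" and v: "v \<in> carrier_vec n"
  shows "M *\<^sub>v v = 0\<^sub>v n \<longleftrightarrow> mat_adjoint M *\<^sub>v v = 0\<^sub>v n"
proof -
  obtain W' where W': "W' \<in> carrier_mat n n" "W * W' = 1\<^sub>m n"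
    using W invertible_mat_iff_inverse by blast
  have "M *\<^sub>v v = 0\<^sub>v n \<longleftrightarrow> star_cong W M *\<^sub>v (W' *\<^sub>v v) = 0\<^sub>v n"
    by (rule mult_vec_zero_iff_star_cong[OF W W' M v])
  also have "\<dots> \<longleftrightarrow> mat_adjoint (star_cong W M) *\<^sub>v (W' *\<^sub>v v) = 0\<^sub>v n"
    using W'(1) v W(1) M by (intro diagonal_mult_vec_zero_iff_adjoint[OF _ diag]) auto
  also have "\<dots> \<longleftrightarrow> mat_adjoint M *\<^sub>v v = 0\<^sub>v n"
    unfolding adjoint_star_cong[OF W(1) M]
    by (rule mult_vec_zero_iff_star_cong[OF W W' adjoint_carrier[OF M] v, symmetric])
  finally show ?thesis .
qed

lemma sum_conjugate_mult_self_eq_0: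
  fixes x :: "nat \<Rightarrow> 'a :: conjugatable_ordered_field"
  assumes "(\<Sum>b<m. conjugate (x b) * x b) = 0" "b < m"
  shows "x b = 0"
proof -
  have "\<forall>b\<in>{..<m}. conjugate (x b) * x b = 0"
    using assms(1) conjugate_square_positive by (subst sum_nonneg_eq_0_iff[symmetric]) (auto simp: mult.commute)
  then show ?thesis using assms(2) by simp
qed

lemma strictly_upper_triangular_zero_of_kernel_adjoint:
  fixes N :: "'a :: conjugatable_ordered_field mat"
  assumes N: "N \<in> carrier_mat m m"
    and upper: "\<And>i j. i < m \<Longrightarrow> j < m \<Longrightarrow> j \<le> i \<Longrightarrow> N $$ (i,j) = 0"
    and ker: "\<And>v. v \<in> carrier_vec m \<Longrightarrow> N *\<^sub>v v = 0\<^sub>v m \<Longrightarrow> mat_adjoint N *\<^sub>v v = 0\<^sub>v m"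
  shows "N = 0\<^sub>m m m"
proof -
  have "\<forall>i<m. N $$ (i,j) = 0" if "j < m" for j
    using that
  proof (induction j rule: less_induct)
    case (less j)
    define w where "w = col N j"
    have w: "w \<in> carrier_vec m" "\<And>b. b < m \<Longrightarrow> w $ b = N $$ (b,j)"
      unfolding w_def using N less.prems by auto
    have "N *\<^sub>v w = 0\<^sub>v m"
    proof (rule eq_vecI)
      fix a assume "a < dim_vec (0\<^sub>v m :: 'a vec)"
      then have a: "a < m" by simp
      have "(N *\<^sub>v w) $ a = (\<Sum>b<m. N $$ (a,b) * w $ b)" by (rule index_mult_mat_vec_sum[OF N w(1) a])
      also have "\<dots> = 0"
      proof (rule sum.neutral, intro ballI)
        fix b assume b: "b \<in> {..<m}"
        show "N $$ (a,b) * w $ b = 0"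
        proof (cases "b < j")
          case True
          then show ?thesis using less.IH[of b] b a less.prems by auto
        next
          case False
          then show ?thesis using upper[of b j] w(2) b less.prems by auto
        qed
      qed
      finally show "(N *\<^sub>v w) $ a = 0\<^sub>v m $ a" using a by simp
    qed (use N in simp)
    then have "(mat_adjoint N *\<^sub>v w) $ j = 0" using ker w(1) less.prems by simp
    moreover have "(mat_adjoint N *\<^sub>v w) $ j = (\<Sum>b<m. conjugate (N $$ (b,j)) * N $$ (b,j))"
      using index_mult_mat_vec_sum[OF adjoint_carrier[OF N] w(1) less.prems] less.prems N w(2)
      by (simp add: carrier_matD)
    ultimately have "(\<Sum>b<m. conjugate (N $$ (b,j)) * N $$ (b,j)) = 0" by metis
    then show ?case using sum_conjugate_mult_self_eq_0[of "\<lambda>b. N $$ (b,j)"] by blast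
  qed
  then show ?thesis using N by (intro eq_matI) auto
qed

lemma diag_block_mat_jordan_0:
  "diag_block_mat (map (\<lambda>r. jordan_block r (0 :: 'a :: {zero,one})) rs)
     \<in> carrier_mat (sum_list rs) (sum_list rs) \<and>
   (\<forall>i j. i < sum_list rs \<longrightarrow> j < sum_list rs \<longrightarrow> j \<le> i \<longrightarrow>
     diag_block_mat (map (\<lambda>r. jordan_block r (0 :: 'a)) rs) $$ (i,j) = 0)"
proof (induction rs)
  case (Cons r rs)
  define N where "N = diag_block_mat (map (\<lambda>r. jordan_block r (0 :: 'a)) rs)"
  have N: "N \<in> carrier_mat (sum_list rs) (sum_list rs)"
    "\<And>i j. i < sum_list rs \<Longrightarrow> j < sum_list rs \<Longrightarrow> j \<le> i \<Longrightarrow> N $$ (i,j) = 0"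
    using Cons.IH unfolding N_def by blast+
  have "diag_block_mat (map (\<lambda>r. jordan_block r (0 :: 'a)) (r # rs)) =
    four_block_mat (jordan_block r 0) (0\<^sub>m r (sum_list rs)) (0\<^sub>m (sum_list rs) r) N"
    using N(1) unfolding N_def by (simp add: Let_def carrier_matD)
  moreover have "four_block_mat (jordan_block r 0) (0\<^sub>m r (sum_list rs)) (0\<^sub>m (sum_list rs) r) N $$ (i,j) = 0"
    if "i < r + sum_list rs" "j < r + sum_list rs" "j \<le> i" for i j
    using that N(1) N(2)[of "i - r" "j - r"] by (auto simp: carrier_matD)
  ultimately show ?case using N(1) by simp
qed simp

lemma diag_block_mat_jordan_1_0:
  "diag_block_mat (map (\<lambda>r. jordan_block r (0 :: 'a :: {zero,one})) (replicate m 1)) = 0\<^sub>m m m"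
proof (induction m)
  case (Suc m)
  have "jordan_block 1 (0 :: 'a) = 0\<^sub>m 1 1" unfolding jordan_block_def by (intro eq_matI) simp_all
  then show ?case using Suc by (simp add: Let_def)
qed simp

lemma kernel_adjoint_four_block_lower:
  fixes B :: "'a :: conjugatable_field mat"
  assumes B: "B \<in> carrier_mat k k" and N: "N \<in> carrier_mat m m"
    and ker: "\<And>x. x \<in> carrier_vec (k + m) \<Longrightarrow> four_block_mat B (0\<^sub>m k m) (0\<^sub>m m k) N *\<^sub>v x = 0\<^sub>v (k + m)
      \<Longrightarrow> mat_adjoint (four_block_mat B (0\<^sub>m k m) (0\<^sub>m m k) N) *\<^sub>v x = 0\<^sub>v (k + m)"
    and v: "v \<in> carrier_vec m" "N *\<^sub>v v = 0\<^sub>v m"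
  shows "mat_adjoint N *\<^sub>v v = 0\<^sub>v m"
proof -
  have aB: "mat_adjoint B \<in> carrier_mat k k" and aN: "mat_adjoint N \<in> carrier_mat m m"
    using B N by auto
  have "four_block_mat B (0\<^sub>m k m) (0\<^sub>m m k) N *\<^sub>v (0\<^sub>v k @\<^sub>v v) = 0\<^sub>v k @\<^sub>v (N *\<^sub>v v)"
    using four_block_mat_mult_vec[OF B _ _ N _ v(1)] B v(1) mult_mat_vec_carrier[OF N v(1)] by simp
  also have "\<dots> = 0\<^sub>v (k + m)" using v(2) by (intro eq_vecI) auto
  finally have "mat_adjoint (four_block_mat B (0\<^sub>m k m) (0\<^sub>m m k) N) *\<^sub>v (0\<^sub>v k @\<^sub>v v) = 0\<^sub>v (k + m)"
    using ker v(1) by simp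
  moreover have "mat_adjoint (four_block_mat B (0\<^sub>m k m) (0\<^sub>m m k) N) *\<^sub>v (0\<^sub>v k @\<^sub>v v)
      = 0\<^sub>v k @\<^sub>v (mat_adjoint N *\<^sub>v v)"
    unfolding adjoint_four_block_mat[OF B zero_carrier_mat zero_carrier_mat N]
    using four_block_mat_mult_vec[OF aB _ _ aN _ v(1)] aB v(1) mult_mat_vec_carrier[OF aN v(1)]
    by simp
  ultimately have "(0\<^sub>v k @\<^sub>v (mat_adjoint N *\<^sub>v v)) $ (k + i) = 0" if "i < m" for i
    using that by simp
  then show ?thesis using aN by (intro eq_vecI) auto
qed

section \<open>From *congruence diagonalizability of \<open>A\<close> to that of its regular part\<close>

lemma star_cong_select_cols:
  fixes W B :: "'a :: conjugatable_field mat"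
  assumes W: "W \<in> carrier_mat k n" and B: "B \<in> carrier_mat k k"
    and \<sigma>: "\<And>a. a < p \<Longrightarrow> \<sigma> a < n" and ab: "a < p" "b < p"
  shows "star_cong (mat k p (\<lambda>(i,a). W $$ (i, \<sigma> a))) B $$ (a,b) = star_cong W B $$ (\<sigma> a, \<sigma> b)"
  using star_cong_index[OF _ B ab, of "mat k p (\<lambda>(i,a). W $$ (i, \<sigma> a))"]
    star_cong_index[OF W B \<sigma>[OF ab(1)] \<sigma>[OF ab(2)]] ab \<sigma> by simp

lemma star_cong_four_block_zero:
  fixes W B :: "'a :: conjugatable_field mat"
  assumes B: "B \<in> carrier_mat k k" and W: "W \<in> carrier_mat (k + m) (k + m)"
  shows "star_cong W (four_block_mat B (0\<^sub>m k m) (0\<^sub>m m k) (0\<^sub>m m m)) =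
    star_cong (mat k (k + m) (\<lambda>(i,j). W $$ (i,j))) B"
    (is "star_cong W ?G = star_cong ?W1 B")
proof (rule eq_matI)
  have Gc: "?G \<in> carrier_mat (k + m) (k + m)" and W1: "?W1 \<in> carrier_mat k (k + m)"
    and dB: "dim_row B = k" "dim_col B = k" using B by auto
  fix a b assume "a < dim_row (star_cong ?W1 B)" "b < dim_col (star_cong ?W1 B)"
  then have ab: "a < k + m" "b < k + m" by auto
  have "star_cong W ?G $$ (a,b) =
      (\<Sum>l<k + m. \<Sum>j<k + m. conjugate (W $$ (l,a)) * ?G $$ (l,j) * W $$ (j,b))"
    by (rule star_cong_index[OF W Gc ab])
  also have "\<dots> = (\<Sum>l<k. \<Sum>j<k + m. conjugate (W $$ (l,a)) * ?G $$ (l,j) * W $$ (j,b))"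
    by (intro sum.mono_neutral_right) (auto simp: dB intro!: sum.neutral)
  also have "\<dots> = (\<Sum>l<k. \<Sum>j<k. conjugate (W $$ (l,a)) * B $$ (l,j) * W $$ (j,b))"
    by (intro sum.cong refl sum.mono_neutral_cong_right) (auto simp: dB)
  also have "\<dots> = star_cong ?W1 B $$ (a,b)"
    using star_cong_index[OF W1 B ab] W ab by simp
  finally show "star_cong W ?G $$ (a,b) = star_cong ?W1 B $$ (a,b)" .
qed (use B W in auto)

text \<open>A column of \<open>W\<close> on which the diagonal matrix \<open>W\<^sup>* B W\<close> vanishes is mapped by
  the invertible \<open>B\<close> into the kernel of \<open>W\<^sup>*\<close>, which is trivial as \<open>W\<close> has a right inverse.\<close>
lemma zero_column_of_star_cong_diagonal:
  fixes B :: "'a :: conjugatable_field mat"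
  assumes B: "B \<in> carrier_mat k k" "invertible_mat B"
    and W: "W \<in> carrier_mat k n" "T \<in> carrier_mat n k" "W * T = 1\<^sub>m k"
    and diag: "diagonal_mat (star_cong W B)" and a: "a < n" "star_cong W B $$ (a,a) = 0"
  shows "col W a = 0\<^sub>v k"
proof -
  have aW: "mat_adjoint W \<in> carrier_mat n k" and aT: "mat_adjoint T \<in> carrier_mat k n" using W by auto
  have wc: "col W a \<in> carrier_vec k" using W(1) by auto
  have "mat_adjoint W *\<^sub>v (B *\<^sub>v col W a) = col (star_cong W B) a"
    using col_mult2[OF mult_carrier_mat[OF aW B(1)] W(1) a(1)] aW B(1) wc by simp
  also have "\<dots> = 0\<^sub>v n"
    using diag a W(1) B(1) by (intro eq_vecI) (auto simp: diagonal_mat_def)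
  finally have "mat_adjoint T *\<^sub>v (mat_adjoint W *\<^sub>v (B *\<^sub>v col W a)) = 0\<^sub>v k"
    using aT by simp
  moreover have "mat_adjoint T * mat_adjoint W = 1\<^sub>m k"
    using adjoint_mult[OF W(1,2)] W(3) by simp
  ultimately have "B *\<^sub>v col W a = 0\<^sub>v k"
    using assoc_mult_mat_vec[OF aT aW mult_mat_vec_carrier[OF B(1) wc]] B(1) wc by simp
  then show ?thesis using B invertible_mat_iff_kernel[OF B(1)] wc by blast
qed

lemma right_inverse_select_cols:
  fixes W :: "'a :: field mat"
  assumes W: "W \<in> carrier_mat k n" "T \<in> carrier_mat n k" "W * T = 1\<^sub>m k"
    and zero: "\<And>a. a < n \<Longrightarrow> a \<notin> J \<Longrightarrow> col W a = 0\<^sub>v k"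
    and \<sigma>: "bij_betw \<sigma> {0..<p} J" "J \<subseteq> {..<n}"
  shows "mat k p (\<lambda>(i,a). W $$ (i, \<sigma> a)) * mat p k (\<lambda>(a,j). T $$ (\<sigma> a, j)) = 1\<^sub>m k"
proof (rule eq_matI)
  fix i j assume "i < dim_row (1\<^sub>m k :: 'a mat)" "j < dim_col (1\<^sub>m k :: 'a mat)"
  then have ij: "i < k" "j < k" by auto
  have "(mat k p (\<lambda>(i,a). W $$ (i, \<sigma> a)) * mat p k (\<lambda>(a,j). T $$ (\<sigma> a, j))) $$ (i,j) =
      (\<Sum>a\<in>{0..<p}. W $$ (i, \<sigma> a) * T $$ (\<sigma> a, j))"
    using ij by (simp add: scalar_prod_def)
  also have "\<dots> = (\<Sum>l\<in>J. W $$ (i,l) * T $$ (l,j))"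
    by (rule sum.reindex_bij_betw[OF \<sigma>(1)])
  also have "\<dots> = (\<Sum>l<n. W $$ (i,l) * T $$ (l,j))"
  proof (rule sum.mono_neutral_left)
    show "\<forall>l \<in> {..<n} - J. W $$ (i,l) * T $$ (l,j) = 0"
    proof
      fix l assume l: "l \<in> {..<n} - J"
      then have "col W l $ i = 0" using zero ij by simp
      then show "W $$ (i,l) * T $$ (l,j) = 0" using W(1) l ij by simp
    qed
  qed (use \<sigma>(2) in auto)
  also have "\<dots> = 1\<^sub>m k $$ (i,j)" using index_mult_mat_sum[OF W(1,2) ij] W(3) by simp
  finally show "(mat k p (\<lambda>(i,a). W $$ (i, \<sigma> a)) * mat p k (\<lambda>(a,j). T $$ (\<sigma> a, j))) $$ (i,j)
    = 1\<^sub>m k $$ (i,j)" .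
qed auto

lemma invertible_of_star_cong_invertible:
  fixes U :: "'a :: conjugatable_field mat"
  assumes B: "B \<in> carrier_mat k k" and U: "U \<in> carrier_mat k p" "Z \<in> carrier_mat p k" "U * Z = 1\<^sub>m k"
    and E: "invertible_mat (star_cong U B)"
  shows "p = k" "invertible_mat U"
proof -
  have aU: "mat_adjoint U \<in> carrier_mat p k" using U by simp
  have Ec: "star_cong U B \<in> carrier_mat p p" using U(1) B by simp
  obtain Ei where Ei: "Ei \<in> carrier_mat p p" "Ei * star_cong U B = 1\<^sub>m p"
    using E invertible_mat_iff_inverse[OF Ec] by blast
  have "Ei * mat_adjoint U * B * U = Ei * star_cong U B"
    using assoc_mult_mat[OF Ei(1) aU B] assoc_mult_mat[OF Ei(1) mult_carrier_mat[OF aU B] U(1)] by simp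
  then have "Ei * mat_adjoint U * B * U = 1\<^sub>m p" using Ei(2) by simp
  then have "p \<le> k" using Ei(1) aU B by (intro right_inverse_dim_le[OF _ U(1)]) auto
  moreover have "k \<le> p" by (rule right_inverse_dim_le[OF U])
  ultimately show pk: "p = k" by simp
  show "invertible_mat U" using invertible_matI[of U k Z] U pk by simp
qed

lemma diagonal_star_cong_select_cols:
  fixes W B :: "'a :: conjugatable_field mat"
  assumes W: "W \<in> carrier_mat k n" and B: "B \<in> carrier_mat k k" and diag: "diagonal_mat (star_cong W B)"
    and \<sigma>: "inj_on \<sigma> {..<p}" "\<And>a. a < p \<Longrightarrow> \<sigma> a < n"
  shows "diagonal_mat (star_cong (mat k p (\<lambda>(i,a). W $$ (i, \<sigma> a))) B)"
  unfolding diagonal_mat_def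
proof (intro allI impI)
  fix a b assume "a < dim_row (star_cong (mat k p (\<lambda>(i,a). W $$ (i, \<sigma> a))) B)"
    "b < dim_col (star_cong (mat k p (\<lambda>(i,a). W $$ (i, \<sigma> a))) B)" "a \<noteq> b"
  then have ab: "a < p" "b < p" "a \<noteq> b" using B by auto
  then have "\<sigma> a \<noteq> \<sigma> b" using \<sigma>(1) unfolding inj_on_def by auto
  then show "star_cong (mat k p (\<lambda>(i,a). W $$ (i, \<sigma> a))) B $$ (a,b) = 0"
    using star_cong_select_cols[OF W B \<sigma>(2) ab(1,2)] diag W B \<sigma>(2)[OF ab(1)] \<sigma>(2)[OF ab(2)]
    unfolding diagonal_mat_def by auto
qed

lemma right_inverse_top_rows:
  fixes W :: "'a :: field mat"
  assumes W: "W \<in> carrier_mat (k + m) (k + m)" "invertible_mat W"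
  obtains T where "T \<in> carrier_mat (k + m) k" "mat k (k + m) (\<lambda>(i,j). W $$ (i,j)) * T = 1\<^sub>m k"
proof -
  define n where "n = k + m"
  obtain T where T: "T \<in> carrier_mat n n" "W * T = 1\<^sub>m n"
    using W invertible_mat_iff_inverse unfolding n_def by blast
  define W1 T1 where "W1 = mat k n (\<lambda>(i,j). W $$ (i,j))" and "T1 = mat n k (\<lambda>(i,j). T $$ (i,j))"
  have W1: "W1 \<in> carrier_mat k n" "T1 \<in> carrier_mat n k" unfolding W1_def T1_def by auto
  have "W1 * T1 = 1\<^sub>m k"
  proof (rule eq_matI)
    fix i j assume "i < dim_row (1\<^sub>m k :: 'a mat)" "j < dim_col (1\<^sub>m k :: 'a mat)"
    then have ij: "i < k" "j < k" by auto
    have "(W1 * T1) $$ (i,j) = (\<Sum>l<n. W $$ (i,l) * T $$ (l,j))"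
      by (subst index_mult_mat_sum[OF W1 ij]) (auto intro!: sum.cong simp: W1_def T1_def ij)
    also have "\<dots> = (W * T) $$ (i,j)"
      by (rule index_mult_mat_sum[of W n n T n, symmetric]) (use W(1) T(1) ij in \<open>auto simp: n_def\<close>)
    finally show "(W1 * T1) $$ (i,j) = 1\<^sub>m k $$ (i,j)" using T(2) ij by (simp add: n_def)
  qed (auto simp: W1_def T1_def)
  then show thesis using that W1(2) unfolding W1_def n_def by blast
qed

lemma star_cong_diagonal_of_padded:
  fixes B :: "'a :: conjugatable_field mat"
  assumes B: "B \<in> carrier_mat k k" "invertible_mat B"
    and W: "W \<in> carrier_mat (k + m) (k + m)" "invertible_mat W"
    and diag: "diagonal_mat (star_cong W (four_block_mat B (0\<^sub>m k m) (0\<^sub>m m k) (0\<^sub>m m m)))"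
  shows "\<exists>U \<in> carrier_mat k k. invertible_mat U \<and> diagonal_mat (star_cong U B)"
proof -
  define n W1 where "n = k + m" and "W1 = mat k n (\<lambda>(i,j). W $$ (i,j))"
  obtain T1 where W1: "W1 \<in> carrier_mat k n" "T1 \<in> carrier_mat n k" "W1 * T1 = 1\<^sub>m k"
    using right_inverse_top_rows[OF W] unfolding W1_def n_def by auto
  define \<Delta> where "\<Delta> = star_cong W1 B"
  have \<Delta>: "\<Delta> \<in> carrier_mat n n" "diagonal_mat \<Delta>"
    using diag star_cong_four_block_zero[OF B(1) W(1)] W1(1) B(1)
    unfolding \<Delta>_def W1_def n_def by auto
  define J where "J = {a. a < n \<and> \<Delta> $$ (a,a) \<noteq> 0}"
  obtain \<sigma> where \<sigma>: "bij_betw \<sigma> {0..<card J} J"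
    using ex_bij_betw_nat_finite[of J] unfolding J_def by auto
  have \<sigma>J: "\<sigma> a < n" "\<Delta> $$ (\<sigma> a, \<sigma> a) \<noteq> 0" if "a < card J" for a
    using \<sigma> that unfolding bij_betw_def J_def by auto
  define U where "U = mat k (card J) (\<lambda>(i,a). W1 $$ (i, \<sigma> a))"
  have Uc: "U \<in> carrier_mat k (card J)" and Ec: "star_cong U B \<in> carrier_mat (card J) (card J)"
    unfolding U_def using B(1) by auto
  have UZ: "U * mat (card J) k (\<lambda>(a,j). T1 $$ (\<sigma> a, j)) = 1\<^sub>m k"
    unfolding U_def using zero_column_of_star_cong_diagonal[OF B W1 \<Delta>(2)[unfolded \<Delta>_def]] \<sigma>
    by (intro right_inverse_select_cols[OF W1]) (auto simp: J_def \<Delta>_def)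
  have diagU: "diagonal_mat (star_cong U B)"
    unfolding U_def using \<Delta>(2) \<sigma> \<sigma>J(1) unfolding \<Delta>_def bij_betw_def atLeast0LessThan
    by (intro diagonal_star_cong_select_cols[OF W1(1) B(1)]) auto
  have "star_cong U B $$ (a,a) \<noteq> 0" if "a < card J" for a
    using star_cong_select_cols[OF W1(1) B(1) \<sigma>J(1) that that] \<sigma>J(2)[OF that]
    unfolding U_def \<Delta>_def by simp
  then have "invertible_mat (star_cong U B)" using invertible_diagonal_mat_iff[OF Ec diagU] by blast
  then have "card J = k" "invertible_mat U"
    using invertible_of_star_cong_invertible[OF B(1) Uc _ UZ] by auto
  then show ?thesis using Uc diagU by (intro bexI[of _ U]) auto
qed

lemma block_form_of_regular_part:
  assumes A: "A \<in> carrier_mat n n" and rp: "regular_part A B"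
  obtains k m S N where "B \<in> carrier_mat k k" "invertible_mat B" "N \<in> carrier_mat m m"
    "\<And>i j. i < m \<Longrightarrow> j < m \<Longrightarrow> j \<le> i \<Longrightarrow> N $$ (i,j) = 0"
    "n = k + m" "S \<in> carrier_mat n n" "invertible_mat S"
    "A = star_cong S (four_block_mat B (0\<^sub>m k m) (0\<^sub>m m k) N)"
proof -
  define k where "k = dim_row B"
  have B: "B \<in> carrier_mat k k" "invertible_mat B"
    using rp unfolding regular_part_def k_def by (auto intro: carrier_matI)
  obtain rs where "star_congruent A (diag_block_mat (B # map (\<lambda>r. jordan_block r 0) rs))"
    using rp unfolding regular_part_def by blast
  moreover define N where "N = diag_block_mat (map (\<lambda>r. jordan_block r (0 :: complex)) rs)"
  moreover define m where "m = sum_list rs"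
  moreover have N: "N \<in> carrier_mat m m" "\<And>i j. i < m \<Longrightarrow> j < m \<Longrightarrow> j \<le> i \<Longrightarrow> N $$ (i,j) = 0"
    using diag_block_mat_jordan_0[of rs] unfolding N_def m_def by blast+
  moreover have "diag_block_mat (B # map (\<lambda>r. jordan_block r 0) rs) =
      four_block_mat B (0\<^sub>m k m) (0\<^sub>m m k) N"
    using B(1) N(1) unfolding N_def by (simp add: Let_def carrier_matD)
  ultimately obtain S where S: "S \<in> carrier_mat (k + m) (k + m)" "invertible_mat S"
    "A = star_cong S (four_block_mat B (0\<^sub>m k m) (0\<^sub>m m k) N)"
    using B(1) unfolding star_congruent_def by auto
  moreover have "n = k + m" using A S(1,3) B(1) N(1) by (metis carrier_matD(1) star_cong_carrier four_block_carrier_mat)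
  ultimately show thesis using that B N by blast
qed

lemma cosquare_conditions_of_diagonalizable:
  assumes A: "A \<in> carrier_mat n n" and diag: "diagonalizable_by_star_congruence A"
    and rp: "regular_part A B"
  shows "diagonalizable_mat (cosquare B) \<and> (\<forall>z. eigenvalue (cosquare B) z \<longrightarrow> cmod z = 1)"
proof -
  obtain k m S N where B: "B \<in> carrier_mat k k" "invertible_mat B" and N: "N \<in> carrier_mat m m"
    "\<And>i j. i < m \<Longrightarrow> j < m \<Longrightarrow> j \<le> i \<Longrightarrow> N $$ (i,j) = 0"
    and n: "n = k + m" and S: "S \<in> carrier_mat n n" "invertible_mat S"
    and AS: "A = star_cong S (four_block_mat B (0\<^sub>m k m) (0\<^sub>m m k) N)"
    using block_form_of_regular_part[OF A rp] by metis
  define G where "G = four_block_mat B (0\<^sub>m k m) (0\<^sub>m m k) N"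
  have G: "G \<in> carrier_mat n n" unfolding G_def n using B N by simp
  obtain R where R: "R \<in> carrier_mat n n" "invertible_mat R" "diagonal_mat (star_cong R A)"
    using diag A unfolding diagonalizable_by_star_congruence_def by auto
  have W: "S * R \<in> carrier_mat n n" "invertible_mat (S * R)"
    using S R invertible_mat_mult by auto
  have diagW: "diagonal_mat (star_cong (S * R) G)"
    using R(3) star_cong_mult[OF S(1) R(1) G] AS unfolding G_def by simp
  have N0: "N = 0\<^sub>m m m"
  proof (rule strictly_upper_triangular_zero_of_kernel_adjoint[OF N])
    fix v assume v: "v \<in> carrier_vec m" "N *\<^sub>v v = 0\<^sub>v m"
    have "\<And>x. x \<in> carrier_vec (k + m) \<Longrightarrow> G *\<^sub>v x = 0\<^sub>v (k + m) \<Longrightarrow> mat_adjoint G *\<^sub>v x = 0\<^sub>v (k + m)"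
      using kernel_adjoint_of_diagonal_star_cong[OF W G diagW] unfolding n by blast
    then show "mat_adjoint N *\<^sub>v v = 0\<^sub>v m"
      unfolding G_def by (rule kernel_adjoint_four_block_lower[OF B(1) N(1) _ v])
  qed
  obtain U where "U \<in> carrier_mat k k" "invertible_mat U" "diagonal_mat (star_cong U B)"
    using star_cong_diagonal_of_padded[OF B W[unfolded n] diagW[unfolded G_def n N0]] by blast
  then show ?thesis by (rule cosquare_of_diagonalizable_by_star_cong[OF B])
qed

section \<open>From the kernel condition to a block form\<close>

lemma exists_perm_to_front:
  assumes J: "J \<subseteq> {..<n}"
  obtains \<sigma> where "bij_betw \<sigma> {..<n} {..<n}" "\<And>a. a < n \<Longrightarrow> \<sigma> a \<in> J \<longleftrightarrow> a < card J"
proof -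
  have fin: "finite J" using J finite_subset by blast
  define xs where "xs = sorted_list_of_set J @ sorted_list_of_set ({..<n} - J)"
  have "distinct xs" "set xs = {..<n}" unfolding xs_def using J fin by auto
  moreover from this have "length xs = n" using distinct_card by fastforce
  ultimately have "bij_betw ((!) xs) {..<n} {..<n}" by (intro bij_betw_nth) auto
  moreover have "xs ! a \<in> J \<longleftrightarrow> a < card J" if "a < n" for a
  proof (cases "a < card J")
    case True
    then show ?thesis using fin nth_mem[of a "sorted_list_of_set J"] unfolding xs_def
      by (simp add: nth_append)
  next
    case False
    moreover have "a - card J < length (sorted_list_of_set ({..<n} - J))"
      using \<open>length xs = n\<close> that fin False unfolding xs_def by simp
    ultimately have "xs ! a \<in> set (sorted_list_of_set ({..<n} - J))"
      using fin nth_mem[of "a - card J" "sorted_list_of_set ({..<n} - J)"] unfolding xs_def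
      by (simp add: nth_append del: set_sorted_list_of_set)
    then show ?thesis using False by simp
  qed
  ultimately show thesis using that by blast
qed

lemma invertible_mat_permute_cols:
  fixes V :: "'a :: field mat"
  assumes V: "V \<in> carrier_mat n n" "invertible_mat V" and \<sigma>: "bij_betw \<sigma> {..<n} {..<n}"
  shows "invertible_mat (mat n n (\<lambda>(i,a). V $$ (i, \<sigma> a)))"
proof -
  define P where "P = mat n n (\<lambda>(l,a). if l = \<sigma> a then 1 else (0 :: 'a))"
  define Q where "Q = mat n n (\<lambda>(a,l). if l = \<sigma> a then 1 else (0 :: 'a))"
  have PQ: "P \<in> carrier_mat n n" "Q \<in> carrier_mat n n" unfolding P_def Q_def by auto
  have \<sigma>n: "\<sigma> a < n" if "a < n" for a using \<sigma> that unfolding bij_betw_def by auto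
  have "Q * P = 1\<^sub>m n"
  proof (rule eq_matI)
    fix a b assume "a < dim_row (1\<^sub>m n :: 'a mat)" "b < dim_col (1\<^sub>m n :: 'a mat)"
    then have ab: "a < n" "b < n" by auto
    have "(Q * P) $$ (a,b) = Q $$ (a, \<sigma> a) * P $$ (\<sigma> a, b)"
      by (subst index_mult_mat_sum[OF PQ(2,1) ab], rule sum_lessThan_single[OF \<sigma>n[OF ab(1)]])
        (use ab in \<open>auto simp: Q_def\<close>)
    also have "\<dots> = 1\<^sub>m n $$ (a,b)"
      using ab \<sigma>n \<sigma> unfolding P_def Q_def bij_betw_def inj_on_def by auto
    finally show "(Q * P) $$ (a,b) = 1\<^sub>m n $$ (a,b)" .
  qed (use PQ in auto)
  then have "invertible_mat P" using invertible_matI[OF PQ(2,1)] mat_mult_left_right_inverse[OF PQ(2,1)]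
    invertible_matI[OF PQ] by blast
  moreover have "V * P = mat n n (\<lambda>(i,a). V $$ (i, \<sigma> a))"
  proof (rule eq_matI)
    fix i a assume "i < dim_row (mat n n (\<lambda>(i,a). V $$ (i, \<sigma> a)))"
      "a < dim_col (mat n n (\<lambda>(i,a). V $$ (i, \<sigma> a)))"
    then have ia: "i < n" "a < n" by auto
    have "(V * P) $$ (i,a) = V $$ (i, \<sigma> a) * P $$ (\<sigma> a, a)"
      by (subst index_mult_mat_sum[OF V(1) PQ(1) ia], rule sum_lessThan_single[OF \<sigma>n[OF ia(2)]])
        (use ia in \<open>auto simp: P_def\<close>)
    then show "(V * P) $$ (i,a) = mat n n (\<lambda>(i,a). V $$ (i, \<sigma> a)) $$ (i,a)"
      using ia \<sigma>n unfolding P_def by auto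
  qed (use V PQ in auto)
  ultimately show ?thesis using invertible_mat_mult[OF V PQ(1)] by metis
qed

lemma diagonal_star_cong_sorted:
  fixes M :: "'a :: conjugatable_field mat"
  assumes M: "M \<in> carrier_mat n n"
    and V: "V \<in> carrier_mat n n" "invertible_mat V" "diagonal_mat (star_cong V M)"
  obtains S p where "S \<in> carrier_mat n n" "invertible_mat S" "p \<le> n" "diagonal_mat (star_cong S M)"
    "\<And>a. a < n \<Longrightarrow> star_cong S M $$ (a,a) \<noteq> 0 \<longleftrightarrow> a < p"
proof -
  define \<Delta> where "\<Delta> = star_cong V M"
  have \<Delta>: "\<Delta> \<in> carrier_mat n n" "diagonal_mat \<Delta>" unfolding \<Delta>_def using V M by auto
  define J where "J = {a. a < n \<and> \<Delta> $$ (a,a) \<noteq> 0}"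
  obtain \<sigma> where \<sigma>: "bij_betw \<sigma> {..<n} {..<n}" "\<And>a. a < n \<Longrightarrow> \<sigma> a \<in> J \<longleftrightarrow> a < card J"
    using exists_perm_to_front[of J n] unfolding J_def by auto
  have \<sigma>n: "\<sigma> a < n" if "a < n" for a using \<sigma>(1) that unfolding bij_betw_def by auto
  define S where "S = mat n n (\<lambda>(i,a). V $$ (i, \<sigma> a))"
  have S: "S \<in> carrier_mat n n" "invertible_mat S"
    unfolding S_def using invertible_mat_permute_cols[OF V(1,2) \<sigma>(1)] by auto
  have Se: "star_cong S M $$ (a,b) = \<Delta> $$ (\<sigma> a, \<sigma> b)" if "a < n" "b < n" for a b
    unfolding S_def \<Delta>_def by (rule star_cong_select_cols[OF V(1) M \<sigma>n that])
  have "diagonal_mat (star_cong S M)"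
    unfolding S_def using \<sigma>(1) \<sigma>n unfolding bij_betw_def
    by (intro diagonal_star_cong_select_cols[OF V(1) M V(3)]) auto
  moreover have "star_cong S M $$ (a,a) \<noteq> 0 \<longleftrightarrow> a < card J" if "a < n" for a
    using Se[OF that that] \<sigma>(2)[OF that] \<sigma>n[OF that] unfolding J_def by auto
  moreover have "card J \<le> n" unfolding J_def by (rule card_mono[of "{..<n}", simplified]) auto
  ultimately show thesis using that S by blast
qed

lemma twisted_hermitian_gram:
  assumes A: "(A :: complex mat) \<in> carrier_mat n n"
  shows "twisted_hermitian n (\<lambda>_. 1) (mat_adjoint A * A)"
  unfolding twisted_hermitian_def
proof (intro allI impI)
  fix i j assume ij: "i < n" "j < n"
  have "(mat_adjoint A * A) $$ (i,j) = (\<Sum>l<n. cnj (A $$ (l,i)) * A $$ (l,j))"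
    using index_mult_mat_sum[OF adjoint_carrier[OF A] A ij] A ij by simp
  moreover have "(mat_adjoint A * A) $$ (j,i) = (\<Sum>l<n. cnj (A $$ (l,j)) * A $$ (l,i))"
    using index_mult_mat_sum[OF adjoint_carrier[OF A] A ij(2,1)] A ij by simp
  ultimately show "(mat_adjoint A * A) $$ (i,j) = 1 * cnj ((mat_adjoint A * A) $$ (j,i))"
    by (simp add: cnj_sum mult.commute)
qed

lemma gram_diagonal_zero_imp_col_zero:
  fixes A :: "'a :: conjugatable_ordered_field mat"
  assumes A: "A \<in> carrier_mat m n" and b: "b < n" "(mat_adjoint A * A) $$ (b,b) = 0"
  shows "col A b = 0\<^sub>v m"
proof -
  have "(mat_adjoint A * A) $$ (b,b) = (\<Sum>l<m. mat_adjoint A $$ (b,l) * A $$ (l,b))"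
    by (rule index_mult_mat_sum[OF adjoint_carrier[OF A] A b(1) b(1)])
  also have "\<dots> = (\<Sum>l<m. conjugate (A $$ (l,b)) * A $$ (l,b))"
    using A b(1) by (intro sum.cong) auto
  finally have "(\<Sum>l<m. conjugate (A $$ (l,b)) * A $$ (l,b)) = 0" using b(2) by metis
  then have "A $$ (l,b) = 0" if "l < m" for l
    using sum_conjugate_mult_self_eq_0[of "\<lambda>l. A $$ (l,b)" m l] that by blast
  then show ?thesis using A b(1) by (intro eq_vecI) auto
qed

lemma col_star_cong:
  fixes S :: "'a :: conjugatable_field mat"
  assumes "S \<in> carrier_mat n n" "M \<in> carrier_mat n n" "b < n"
  shows "col (star_cong S M) b = mat_adjoint S *\<^sub>v (M *\<^sub>v col S b)"
  using assms col_mult2[OF mult_carrier_mat[OF adjoint_carrier[OF assms(1)] assms(2)] assms(1,3)]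
    assoc_mult_mat_vec[OF adjoint_carrier[OF assms(1)] assms(2), of "col S b"]
  by simp

lemma star_cong_gram:
  fixes A :: "'a :: conjugatable_field mat"
  assumes A: "A \<in> carrier_mat n n" and S: "S \<in> carrier_mat n n"
  shows "star_cong S (mat_adjoint A * A) = mat_adjoint (A * S) * (A * S)"
  using A S adjoint_mult[OF A S]
  by (simp add: assoc_mult_mat[of _ n n _ n _ n] mult_carrier_mat[of _ n n _ n])

lemma star_cong_zero_outside:
  fixes A :: "'a :: conjugatable_field mat"
  assumes A: "A \<in> carrier_mat n n" and S: "S \<in> carrier_mat n n"
    and ker: "\<And>v. v \<in> carrier_vec n \<Longrightarrow> A *\<^sub>v v = 0\<^sub>v n \<Longrightarrow> mat_adjoint A *\<^sub>v v = 0\<^sub>v n"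
    and cols: "\<And>b. b < n \<Longrightarrow> p \<le> b \<Longrightarrow> A *\<^sub>v col S b = 0\<^sub>v n"
    and ab: "a < n" "b < n" "p \<le> a \<or> p \<le> b"
  shows "star_cong S A $$ (a,b) = 0"
proof -
  have aS: "mat_adjoint S \<in> carrier_mat n n" and G: "star_cong S A \<in> carrier_mat n n"
    using A S by auto
  show ?thesis
  proof (cases "p \<le> b")
    case True
    then have "col (star_cong S A) b = 0\<^sub>v n" using col_star_cong[OF S A ab(2)] cols ab aS by simp
    then show ?thesis using G ab by (metis col_def index_vec index_zero_vec(1) carrier_matD(1))
  next
    case False
    then have "mat_adjoint A *\<^sub>v col S a = 0\<^sub>v n" using cols ker S ab by simp
    then have "col (mat_adjoint (star_cong S A)) a = 0\<^sub>v n"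
      unfolding adjoint_star_cong[OF S A] using col_star_cong[OF S _ ab(1)] A aS by simp
    then have "mat_adjoint (star_cong S A) $$ (b,a) = 0" using G ab
      by (metis adjoint_carrier carrier_matD(1) col_def index_vec index_zero_vec(1))
    then show ?thesis using G S ab by simp
  qed
qed

lemma invertible_block_of_gram:
  fixes A :: "'a :: conjugatable_field mat"
  assumes A: "A \<in> carrier_mat n n" and S: "S \<in> carrier_mat n n" "invertible_mat S" and p: "p \<le> n"
    and C: "diagonal_mat (star_cong S (mat_adjoint A * A))"
      "\<And>a. a < p \<Longrightarrow> star_cong S (mat_adjoint A * A) $$ (a,a) \<noteq> 0"
    and B: "B \<in> carrier_mat p p"
    and SA: "star_cong S A = four_block_mat B (0\<^sub>m p (n - p)) (0\<^sub>m (n - p) p) (0\<^sub>m (n - p) (n - p))"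
  shows "invertible_mat B"
  unfolding invertible_mat_iff_kernel[OF B]
proof (intro ballI impI)
  fix u assume u: "u \<in> carrier_vec p" "B *\<^sub>v u = 0\<^sub>v p"
  define x where "x = u @\<^sub>v 0\<^sub>v (n - p)"
  have x: "x \<in> carrier_vec n" using u(1) p unfolding x_def by (intro carrier_vecI) auto
  have aS: "mat_adjoint S \<in> carrier_mat n n" and AS: "A * S \<in> carrier_mat n n"
    using A S(1) by (auto intro: mult_carrier_mat)
  have "mat_adjoint S *\<^sub>v ((A * S) *\<^sub>v x) = star_cong S A *\<^sub>v x"
    using assoc_mult_mat[OF aS A S(1)] assoc_mult_mat_vec[OF aS AS x] by simp
  also have "\<dots> = (B *\<^sub>v u + 0\<^sub>m p (n - p) *\<^sub>v 0\<^sub>v (n - p)) @\<^sub>v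
      (0\<^sub>m (n - p) p *\<^sub>v u + 0\<^sub>m (n - p) (n - p) *\<^sub>v 0\<^sub>v (n - p))"
    unfolding SA x_def
    by (rule four_block_mat_mult_vec[OF B zero_carrier_mat zero_carrier_mat zero_carrier_mat u(1) zero_carrier_vec])
  also have "\<dots> = 0\<^sub>v n" using u p by (intro eq_vecI) auto
  finally have "(A * S) *\<^sub>v x = 0\<^sub>v n"
    using invertible_mat_adjoint[OF S] invertible_mat_iff_kernel[OF aS] AS x by auto
  then have "star_cong S (mat_adjoint A * A) *\<^sub>v x = 0\<^sub>v n"
    unfolding star_cong_gram[OF A S(1)] using assoc_mult_mat_vec[OF adjoint_carrier[OF AS] AS x] AS by simp
  moreover have "star_cong S (mat_adjoint A * A) \<in> carrier_mat n n"
    using star_cong_carrier[OF S(1) mult_carrier_mat[OF adjoint_carrier[OF A] A]] .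
  ultimately have Cx: "star_cong S (mat_adjoint A * A) $$ (a,a) * x $ a = 0" if "a < n" for a
    using diagonal_mult_mat_vec[OF _ C(1) x that] that by simp
  have "u $ a = 0" if "a < p" for a
  proof -
    have "x $ a = u $ a" using that u(1) unfolding x_def by simp
    then show ?thesis using Cx[of a] C(2)[OF that] that p by simp
  qed
  then show "u = 0\<^sub>v p" using u(1) by (intro eq_vecI) auto
qed

lemma block_form_of_kernel_adjoint:
  fixes A :: "complex mat"
  assumes A: "A \<in> carrier_mat n n"
    and ker: "\<And>v. v \<in> carrier_vec n \<Longrightarrow> A *\<^sub>v v = 0\<^sub>v n \<Longrightarrow> mat_adjoint A *\<^sub>v v = 0\<^sub>v n"
  obtains S p B where "S \<in> carrier_mat n n" "invertible_mat S" "p \<le> n"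
    "B \<in> carrier_mat p p" "invertible_mat B"
    "star_cong S A = four_block_mat B (0\<^sub>m p (n - p)) (0\<^sub>m (n - p) p) (0\<^sub>m (n - p) (n - p))"
proof -
  have H: "mat_adjoint A * A \<in> carrier_mat n n" by (rule mult_carrier_mat[OF adjoint_carrier[OF A] A])
  obtain V where "V \<in> carrier_mat n n" "invertible_mat V" "diagonal_mat (star_cong V (mat_adjoint A * A))"
    using twisted_hermitian_diagonalizable[OF H twisted_hermitian_gram[OF A]] by auto
  then obtain S p where S: "S \<in> carrier_mat n n" "invertible_mat S" "p \<le> n"
    and C: "diagonal_mat (star_cong S (mat_adjoint A * A))"
      "\<And>a. a < n \<Longrightarrow> star_cong S (mat_adjoint A * A) $$ (a,a) \<noteq> 0 \<longleftrightarrow> a < p"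
    using diagonal_star_cong_sorted[OF H] by blast
  have AS: "A * S \<in> carrier_mat n n" using A S(1) by (auto intro: mult_carrier_mat)
  have cols: "A *\<^sub>v col S b = 0\<^sub>v n" if "b < n" "p \<le> b" for b
  proof -
    have "star_cong S (mat_adjoint A * A) $$ (b,b) = 0" using C(2)[OF that(1)] that by simp
    then have "col (A * S) b = 0\<^sub>v n"
      using gram_diagonal_zero_imp_col_zero[OF AS that(1)] unfolding star_cong_gram[OF A S(1)] by simp
    then show ?thesis using col_mult2[OF A S(1) that(1)] by simp
  qed
  define B where "B = mat p p (\<lambda>(i,j). star_cong S A $$ (i,j))"
  have B: "B \<in> carrier_mat p p" unfolding B_def by simp
  have SA: "star_cong S A = four_block_mat B (0\<^sub>m p (n - p)) (0\<^sub>m (n - p) p) (0\<^sub>m (n - p) (n - p))"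
    using star_cong_zero_outside[OF A S(1) ker cols] A S(1,3)
    by (intro eq_matI) (auto simp: B_def)
  moreover have "invertible_mat B"
    using C(2) S(3) by (intro invertible_block_of_gram[OF A S C(1) _ B SA]) auto
  ultimately show thesis using that S B by blast
qed

section \<open>From the conditions back to diagonalizability\<close>

lemma regular_part_of_block_form:
  assumes A: "A = star_cong S (four_block_mat B (0\<^sub>m p q) (0\<^sub>m q p) (0\<^sub>m q q))"
    and S: "S \<in> carrier_mat (p + q) (p + q)" "invertible_mat S"
    and B: "B \<in> carrier_mat p p" "invertible_mat B"
  shows "regular_part A B"
proof -
  have "diag_block_mat (B # map (\<lambda>r. jordan_block r 0) (replicate q 1)) =
      four_block_mat B (0\<^sub>m p q) (0\<^sub>m q p) (0\<^sub>m q q)"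
    unfolding diag_block_mat.simps(2) Let_def diag_block_mat_jordan_1_0 using B(1) by (simp add: carrier_matD)
  moreover have "star_congruent A (four_block_mat B (0\<^sub>m p q) (0\<^sub>m q p) (0\<^sub>m q q))"
    unfolding star_congruent_def using A S B(1) by auto
  ultimately show ?thesis
    unfolding regular_part_def using B by (intro conjI exI[of _ "replicate q 1"]) (auto simp: carrier_matD)
qed

lemma star_cong_four_block_one:
  fixes R B :: "'a :: conjugatable_field mat"
  assumes R: "R \<in> carrier_mat p p" and B: "B \<in> carrier_mat p p"
  shows "star_cong (four_block_mat R (0\<^sub>m p q) (0\<^sub>m q p) (1\<^sub>m q)) (four_block_mat B (0\<^sub>m p q) (0\<^sub>m q p) (0\<^sub>m q q))
    = four_block_mat (star_cong R B) (0\<^sub>m p q) (0\<^sub>m q p) (0\<^sub>m q q)"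
proof -
  have aR: "mat_adjoint R \<in> carrier_mat p p" and RB: "mat_adjoint R * B \<in> carrier_mat p p"
    using R B by auto
  have "mat_adjoint (four_block_mat R (0\<^sub>m p q) (0\<^sub>m q p) (1\<^sub>m q)) =
      four_block_mat (mat_adjoint R) (0\<^sub>m p q) (0\<^sub>m q p) (1\<^sub>m q)"
    using adjoint_four_block_mat[OF R zero_carrier_mat zero_carrier_mat one_carrier_mat] by simp
  moreover have "four_block_mat (mat_adjoint R) (0\<^sub>m p q) (0\<^sub>m q p) (1\<^sub>m q) *
      four_block_mat B (0\<^sub>m p q) (0\<^sub>m q p) (0\<^sub>m q q) =
      four_block_mat (mat_adjoint R * B) (0\<^sub>m p q) (0\<^sub>m q p) (0\<^sub>m q q)"
    using mult_four_block_mat[OF aR zero_carrier_mat zero_carrier_mat one_carrier_mat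
      B zero_carrier_mat zero_carrier_mat zero_carrier_mat] aR B by (simp add: right_mult_zero_mat)
  moreover have "four_block_mat (mat_adjoint R * B) (0\<^sub>m p q) (0\<^sub>m q p) (0\<^sub>m q q) *
      four_block_mat R (0\<^sub>m p q) (0\<^sub>m q p) (1\<^sub>m q) =
      four_block_mat (mat_adjoint R * B * R) (0\<^sub>m p q) (0\<^sub>m q p) (0\<^sub>m q q)"
    using mult_four_block_mat[OF RB zero_carrier_mat zero_carrier_mat zero_carrier_mat
      R zero_carrier_mat zero_carrier_mat one_carrier_mat] RB R by (simp add: right_mult_zero_mat)
  ultimately show ?thesis by simp
qed

lemma invertible_four_block_one:
  fixes R :: "'a :: field mat"
  assumes R: "R \<in> carrier_mat p p" "invertible_mat R"
  shows "invertible_mat (four_block_mat R (0\<^sub>m p q) (0\<^sub>m q p) (1\<^sub>m q))"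
proof -
  obtain R' where R': "R' \<in> carrier_mat p p" "R * R' = 1\<^sub>m p"
    using R invertible_mat_iff_inverse by blast
  have "four_block_mat R (0\<^sub>m p q) (0\<^sub>m q p) (1\<^sub>m q) * four_block_mat R' (0\<^sub>m p q) (0\<^sub>m q p) (1\<^sub>m q)
      = 1\<^sub>m (p + q)"
    using mult_four_block_mat[OF R(1) zero_carrier_mat zero_carrier_mat one_carrier_mat
      R'(1) zero_carrier_mat zero_carrier_mat one_carrier_mat] R(1) R' by simp
  then show ?thesis using R(1) R'(1) by (intro invertible_matI) auto
qed

lemma diagonal_four_block_zero:
  "D \<in> carrier_mat p p \<Longrightarrow> diagonal_mat D \<Longrightarrow> diagonal_mat (four_block_mat D (0\<^sub>m p q) (0\<^sub>m q p) (0\<^sub>m q q))"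
  unfolding diagonal_mat_def by (auto simp: carrier_matD)

lemma diagonalizable_by_star_congruence_of_conditions:
  assumes A: "A \<in> carrier_mat n n"
    and ker: "\<And>v. v \<in> carrier_vec n \<Longrightarrow> A *\<^sub>v v = 0\<^sub>v n \<Longrightarrow> mat_adjoint A *\<^sub>v v = 0\<^sub>v n"
    and cosq: "\<forall>B. regular_part A B \<longrightarrow>
      diagonalizable_mat (cosquare B) \<and> (\<forall>z. eigenvalue (cosquare B) z \<longrightarrow> cmod z = 1)"
  shows "diagonalizable_by_star_congruence A"
proof -
  obtain S p B where S: "S \<in> carrier_mat n n" "invertible_mat S" and "p \<le> n"
    and B: "B \<in> carrier_mat p p" "invertible_mat B"
    and SA: "star_cong S A = four_block_mat B (0\<^sub>m p (n - p)) (0\<^sub>m (n - p) p) (0\<^sub>m (n - p) (n - p))"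
    by (rule block_form_of_kernel_adjoint[OF A ker])
  define q where "q = n - p"
  have n: "n = p + q" unfolding q_def using \<open>p \<le> n\<close> by simp
  have SA: "star_cong S A = four_block_mat B (0\<^sub>m p q) (0\<^sub>m q p) (0\<^sub>m q q)"
    using SA unfolding q_def .
  obtain S' where S': "S' \<in> carrier_mat n n" "S * S' = 1\<^sub>m n" "S' * S = 1\<^sub>m n"
    using S invertible_mat_iff_inverse by blast
  have "A = star_cong S' (star_cong S A)" using star_cong_inverse[OF S(1) S'(1,2) A] by simp
  then have "regular_part A B"
    using S'(1) invertible_matI[OF S'(1) S(1) S'(3)] B
    by (intro regular_part_of_block_form) (auto simp: SA n)
  then obtain R where R: "R \<in> carrier_mat p p" "invertible_mat R" "diagonal_mat (star_cong R B)"
    using star_cong_diagonal_of_cosquare[OF B] cosq by blast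
  define F where "F = four_block_mat R (0\<^sub>m p q) (0\<^sub>m q p) (1\<^sub>m q)"
  have F: "F \<in> carrier_mat n n" "invertible_mat F"
    unfolding F_def n using R invertible_four_block_one by auto
  have "star_cong (S * F) A = four_block_mat (star_cong R B) (0\<^sub>m p q) (0\<^sub>m q p) (0\<^sub>m q q)"
    using star_cong_mult[OF S(1) F(1) A] SA star_cong_four_block_one[OF R(1) B(1)]
    unfolding F_def by simp
  then show ?thesis
    unfolding diagonalizable_by_star_congruence_def
    using S F A R B diagonal_four_block_zero[of "star_cong R B" p q]
    by (intro exI[of _ "S * F"]) (auto simp: invertible_mat_mult carrier_matD)
qed

theorem mainTheorem5:
  fixes A :: "complex mat" and n :: nat
  assumes "A \<in> carrier_mat n n"
  shows "diagonalizable_by_star_congruence A \<longleftrightarrow>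
    (mat_kernel A = mat_kernel (mat_adjoint A) \<and>
     (\<forall>B. regular_part A B \<longrightarrow>
        diagonalizable_mat (cosquare B) \<and> (\<forall>z. eigenvalue (cosquare B) z \<longrightarrow> cmod z = 1)))"
proof -
  have kernel: "mat_kernel A = mat_kernel (mat_adjoint A) \<longleftrightarrow>
      (\<forall>v \<in> carrier_vec n. A *\<^sub>v v = 0\<^sub>v n \<longleftrightarrow> mat_adjoint A *\<^sub>v v = 0\<^sub>v n)"
    using assms unfolding mat_kernel_def by auto
  show ?thesis
  proof
    assume diag: "diagonalizable_by_star_congruence A"
    then obtain R where "R \<in> carrier_mat n n" "invertible_mat R" "diagonal_mat (star_cong R A)"
      using assms unfolding diagonalizable_by_star_congruence_def by auto
    then show "mat_kernel A = mat_kernel (mat_adjoint A) \<and> (\<forall>B. regular_part A B \<longrightarrow>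
        diagonalizable_mat (cosquare B) \<and> (\<forall>z. eigenvalue (cosquare B) z \<longrightarrow> cmod z = 1))"
      using kernel kernel_adjoint_of_diagonal_star_cong[OF _ _ assms]
        cosquare_conditions_of_diagonalizable[OF assms diag] by blast
  next
    assume "mat_kernel A = mat_kernel (mat_adjoint A) \<and> (\<forall>B. regular_part A B \<longrightarrow>
        diagonalizable_mat (cosquare B) \<and> (\<forall>z. eigenvalue (cosquare B) z \<longrightarrow> cmod z = 1))"
    then show "diagonalizable_by_star_congruence A"
      using kernel diagonalizable_by_star_congruence_of_conditions[OF assms] by blast
  qed
qed

end
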